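(* Let $A$ be a strongly AUF algebra, let $G$ be a projective generator of $\mathrm{Coh}_{\mathrm L}(A)$, and let $B=\mathrm{End}_{A,-}(G)^{\mathrm{op}}$, so that $G$ is an $A$-$B$ bimodule. Then the map $A\to\mathrm{End}^0_{-,B}(G)$ sending each $a\in A$ to the operator of left multiplication by $a$ on $G$ is a linear isomorphism.
   Context: All algebras are associative $\mathbb C$-algebras, not necessarily unital. An idempotent is $e$ with $e^2=e$. An algebra $A$ is AUF if there is a family $(e_i)_{i\in\mathfrak I}$ of mutually orthogonal idempotents with $\dim e_iAe_j<\infty$ and $A=\sum_{i,j}e_iAe_j$. A left $A$-module $M$ is quasicoherent if $\xi\in A\xi$ for all $\xi\in M$, coherent if moreover finitely generated; $\mathrm{Coh}_{\mathrm L}(A)$ is the category of coherent left $A$-modules. Irreducible means nonzero with no nonzero proper submodules. An idempotent $e$ is generating if every irreducible quasicoherent left $A$-module is a quotient of $Ae$; $A$ is strongly AUF if it is AUF and has a generating idempotent. A projective generator of $\mathrm{Coh}_{\mathrm L}(A)$ is an object projective as a left $A$-module such that every object of $\mathrm{Coh}_{\mathrm L}(A)$ is a quotient of a finite direct sum of copies of it. $B=\mathrm{End}_{A,-}(G)^{\mathrm{op}}$ acts on the right of $G$ by $\xi\cdot T=T(\xi)$. For a quasicoherent left $A$-module $M$: $M^\vee$ is the space of linear functionals $\varphi$ on $M$ for which there is an idempotent $e\in A$ with $\varphi(e\eta)=\varphi(\eta)$ for all $\eta\in M$; $\mathrm{End}^0(M)\subset\mathrm{End}(M)$ is the span of the operators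 $\eta\mapsto\varphi(\eta)\xi$ with $\xi\in M$, $\varphi\in M^\vee$; if $M$ carries a right action of an algebra $B$ commuting with $A$, $\mathrm{End}^0_{-,B}(M)=\{T\in\mathrm{End}^0(M):T(\xi b)=T(\xi)b\ \forall\xi,b\}$. *)

theory Defs
  imports Complex_Main
begin

text \<open>
  The algebra A is the whole of a type 'a of class ring (associative, not
  necessarily unital), together with a complex scalar multiplication asc
  making it a complex algebra.  Modules are given by explicit carriers
  inside some ambient type 'm, with their own complex vector space
  structure and a left A-action.
\<close>

definition is_calg :: "(complex \<Rightarrow> 'a::ring \<Rightarrow> 'a) \<Rightarrow> bool" where
  "is_calg asc \<longleftrightarrow> vector_space asc \<and>
     (\<forall>c a b. asc c (a * b) = asc c a * b \<and> asc c (a * b) = a * asc c b)"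

record 'm vsp =
  vcarrier :: "'m set"
  vadd :: "'m \<Rightarrow> 'm \<Rightarrow> 'm"
  vzero :: 'm
  vsc :: "complex \<Rightarrow> 'm \<Rightarrow> 'm"

record ('a, 'm) lmod = "'m vsp" +
  lact :: "'a \<Rightarrow> 'm \<Rightarrow> 'm"

definition cvs :: "('m, 'z) vsp_scheme \<Rightarrow> bool" where
  "cvs V \<longleftrightarrow>
     vzero V \<in> vcarrier V \<and>
     (\<forall>x\<in>vcarrier V. \<forall>y\<in>vcarrier V. vadd V x y \<in> vcarrier V) \<and>
     (\<forall>c. \<forall>x\<in>vcarrier V. vsc V c x \<in> vcarrier V) \<and>
     (\<forall>x\<in>vcarrier V. \<forall>y\<in>vcarrier V. \<forall>z\<in>vcarrier V.
        vadd V (vadd V x y) z = vadd V x (vadd V y z)) \<and>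
     (\<forall>x\<in>vcarrier V. \<forall>y\<in>vcarrier V. vadd V x y = vadd V y x) \<and>
     (\<forall>x\<in>vcarrier V. vadd V (vzero V) x = x) \<and>
     (\<forall>x\<in>vcarrier V. \<exists>y\<in>vcarrier V. vadd V x y = vzero V) \<and>
     (\<forall>c. \<forall>x\<in>vcarrier V. \<forall>y\<in>vcarrier V.
        vsc V c (vadd V x y) = vadd V (vsc V c x) (vsc V c y)) \<and>
     (\<forall>c d. \<forall>x\<in>vcarrier V. vsc V (c + d) x = vadd V (vsc V c x) (vsc V d x)) \<and>
     (\<forall>c d. \<forall>x\<in>vcarrier V. vsc V c (vsc V d x) = vsc V (c * d) x) \<and>
     (\<forall>x\<in>vcarrier V. vsc V 1 x = x)"

definition lmodule :: "(complex \<Rightarrow> 'a::ring \<Rightarrow> 'a) \<Rightarrow> ('a, 'm) lmod \<Rightarrow> bool" where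
  "lmodule asc M \<longleftrightarrow> cvs M \<and>
     (\<forall>a. \<forall>x\<in>vcarrier M. lact M a x \<in> vcarrier M) \<and>
     (\<forall>a. \<forall>x\<in>vcarrier M. \<forall>y\<in>vcarrier M.
        lact M a (vadd M x y) = vadd M (lact M a x) (lact M a y)) \<and>
     (\<forall>a b. \<forall>x\<in>vcarrier M. lact M (a + b) x = vadd M (lact M a x) (lact M b x)) \<and>
     (\<forall>a b. \<forall>x\<in>vcarrier M. lact M (a * b) x = lact M a (lact M b x)) \<and>
     (\<forall>c a. \<forall>x\<in>vcarrier M. lact M (asc c a) x = vsc M c (lact M a x)) \<and>
     (\<forall>c a. \<forall>x\<in>vcarrier M. lact M a (vsc M c x) = vsc M c (lact M a x))"

definition submodule :: "('a, 'm) lmod \<Rightarrow> 'm set \<Rightarrow> bool" where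
  "submodule M N \<longleftrightarrow> N \<subseteq> vcarrier M \<and> vzero M \<in> N \<and>
     (\<forall>x\<in>N. \<forall>y\<in>N. vadd M x y \<in> N) \<and> (\<forall>c. \<forall>x\<in>N. vsc M c x \<in> N) \<and>
     (\<forall>a. \<forall>x\<in>N. lact M a x \<in> N)"

definition irreducible_mod :: "('a, 'm) lmod \<Rightarrow> bool" where
  "irreducible_mod M \<longleftrightarrow> vcarrier M \<noteq> {vzero M} \<and>
     (\<forall>N. submodule M N \<longrightarrow> N = {vzero M} \<or> N = vcarrier M)"

definition quasicoherent :: "('a, 'm) lmod \<Rightarrow> bool" where
  "quasicoherent M \<longleftrightarrow> (\<forall>x\<in>vcarrier M. \<exists>a. lact M a x = x)"

definition fin_gen :: "('a, 'm) lmod \<Rightarrow> bool" where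
  "fin_gen M \<longleftrightarrow> (\<exists>S. finite S \<and> S \<subseteq> vcarrier M \<and>
     (\<forall>N. submodule M N \<and> S \<subseteq> N \<longrightarrow> N = vcarrier M))"

definition coherent :: "('a, 'm) lmod \<Rightarrow> bool" where
  "coherent M \<longleftrightarrow> quasicoherent M \<and> fin_gen M"

definition lhom :: "('a, 'm) lmod \<Rightarrow> ('a, 'n) lmod \<Rightarrow> ('m \<Rightarrow> 'n) \<Rightarrow> bool" where
  "lhom M N f \<longleftrightarrow> (\<forall>x\<in>vcarrier M. f x \<in> vcarrier N) \<and>
     (\<forall>x\<in>vcarrier M. \<forall>y\<in>vcarrier M. f (vadd M x y) = vadd N (f x) (f y)) \<and>
     (\<forall>c. \<forall>x\<in>vcarrier M. f (vsc M c x) = vsc N c (f x)) \<and>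
     (\<forall>a. \<forall>x\<in>vcarrier M. f (lact M a x) = lact N a (f x))"

definition is_quotient_of :: "('a, 'm) lmod \<Rightarrow> ('a, 'n) lmod \<Rightarrow> bool" where
  "is_quotient_of M N \<longleftrightarrow> (\<exists>f. lhom N M f \<and> f ` vcarrier N = vcarrier M)"

definition mod_Ae :: "(complex \<Rightarrow> 'a::ring \<Rightarrow> 'a) \<Rightarrow> 'a \<Rightarrow> ('a, 'a) lmod" where
  "mod_Ae asc e = \<lparr>vcarrier = {a * e |a. True}, vadd = (+), vzero = 0, vsc = asc,
                   lact = (*)\<rparr>"

definition dsum_pow :: "('a, 'g) lmod \<Rightarrow> nat \<Rightarrow> ('a, nat \<Rightarrow> 'g) lmod" where
  "dsum_pow G n = \<lparr>vcarrier = {f. (\<forall>i<n. f i \<in> vcarrier G) \<and> (\<forall>i\<ge>n. f i = vzero G)},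
     vadd = (\<lambda>f g i. vadd G (f i) (g i)), vzero = (\<lambda>i. vzero G),
     vsc = (\<lambda>c f i. vsc G c (f i)), lact = (\<lambda>a f i. lact G a (f i))\<rparr>"

definition idem :: "'a::ring \<Rightarrow> bool" where
  "idem e \<longleftrightarrow> e * e = e"

definition AUF :: "(complex \<Rightarrow> 'a::ring \<Rightarrow> 'a) \<Rightarrow> bool" where
  "AUF asc \<longleftrightarrow> (\<exists>(I::'a set) (e::'a \<Rightarrow> 'a).
     (\<forall>i\<in>I. idem (e i)) \<and>
     (\<forall>i\<in>I. \<forall>j\<in>I. i \<noteq> j \<longrightarrow> e i * e j = 0) \<and>
     (\<forall>i\<in>I. \<forall>j\<in>I. \<exists>B. finite B \<and>
          {e i * a * e j |a. True} \<subseteq> module.span asc B) \<and>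
     (\<forall>a. \<exists>F x. finite F \<and> F \<subseteq> I \<times> I \<and>
          a = (\<Sum>(i, j)\<in>F. e i * x (i, j) * e j)))"

text \<open>Quantification over all irreducible
  quasicoherent modules is over modules with carrier in 'a set; every
  irreducible quasicoherent module is isomorphic to one of these
  (it is cyclic, hence of the form A/ann).\<close>
definition generating_idem :: "(complex \<Rightarrow> 'a::ring \<Rightarrow> 'a) \<Rightarrow> 'a \<Rightarrow> bool" where
  "generating_idem asc e \<longleftrightarrow> idem e \<and>
     (\<forall>M :: ('a, 'a set) lmod. lmodule asc M \<and> quasicoherent M \<and> irreducible_mod M
        \<longrightarrow> is_quotient_of M (mod_Ae asc e))"

definition strongly_AUF :: "(complex \<Rightarrow> 'a::ring \<Rightarrow> 'a) \<Rightarrow> bool" where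
  "strongly_AUF asc \<longleftrightarrow> AUF asc \<and> (\<exists>e. generating_idem asc e)"

text \<open>Projective left A-module: lifting property along surjective
  homomorphisms, tested on modules with carrier in the type
  'g \<Rightarrow> complex \<times> 'a (large enough to contain G and a free module
  over the unitisation on the elements of G).\<close>
definition projective_mod :: "(complex \<Rightarrow> 'a::ring \<Rightarrow> 'a) \<Rightarrow> ('a, 'g) lmod \<Rightarrow> bool" where
  "projective_mod asc P \<longleftrightarrow>
     (\<forall>(N :: ('a, 'g \<Rightarrow> complex \<times> 'a) lmod) (N' :: ('a, 'g \<Rightarrow> complex \<times> 'a) lmod) p f.
        lmodule asc N \<and> lmodule asc N' \<and> lhom N N' p \<and> p ` vcarrier N = vcarrier N' \<and>
        lhom P N' f \<longrightarrow>
        (\<exists>h. lhom P N h \<and> (\<forall>x\<in>vcarrier P. p (h x) = f x)))"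

text \<open>Projective generator of Coh_L(A).  Coherent modules are tested with
  carriers in (nat \<Rightarrow> 'a) set; every coherent module is isomorphic to one
  of these (a quotient of A^n).\<close>
definition proj_generator :: "(complex \<Rightarrow> 'a::ring \<Rightarrow> 'a) \<Rightarrow> ('a, 'g) lmod \<Rightarrow> bool" where
  "proj_generator asc G \<longleftrightarrow> lmodule asc G \<and> coherent G \<and> projective_mod asc G \<and>
     (\<forall>M :: ('a, (nat \<Rightarrow> 'a) set) lmod. lmodule asc M \<and> coherent M \<longrightarrow>
        (\<exists>n. is_quotient_of M (dsum_pow G n)))"

definition dual0 :: "('a::ring, 'm) lmod \<Rightarrow> ('m \<Rightarrow> complex) set" where
  "dual0 M = {\<phi>. (\<forall>x\<in>vcarrier M. \<forall>y\<in>vcarrier M. \<phi> (vadd M x y) = \<phi> x + \<phi> y) \<and>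
                 (\<forall>c. \<forall>x\<in>vcarrier M. \<phi> (vsc M c x) = c * \<phi> x) \<and>
                 (\<exists>e. idem e \<and> (\<forall>y\<in>vcarrier M. \<phi> (lact M e y) = \<phi> y))}"

definition vsum_list :: "('a, 'm) lmod \<Rightarrow> 'm list \<Rightarrow> 'm" where
  "vsum_list M xs = foldr (vadd M) xs (vzero M)"

text \<open>End^0(M): span of the rank-one operators \<eta> \<mapsto> \<phi>(\<eta>)\<xi>
  (operators are compared on the carrier; scalars are absorbed into \<xi>).\<close>
definition End0 :: "('a::ring, 'm) lmod \<Rightarrow> ('m \<Rightarrow> 'm) set" where
  "End0 M = {T. \<exists>cs :: (complex \<times> ('m \<Rightarrow> complex) \<times> 'm) list.
       (\<forall>(c, \<phi>, \<xi>)\<in>set cs. \<phi> \<in> dual0 M \<and> \<xi> \<in> vcarrier M) \<and>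
       (\<forall>y\<in>vcarrier M. T y = vsum_list M (map (\<lambda>(c, \<phi>, \<xi>). vsc M (c * \<phi> y) \<xi>) cs))}"

text \<open>End^0_{-,B}(G) with B = End_{A,-}(G)^op acting on the right by
  \<xi>\<cdot>b = b(\<xi>): the elements of End0 commuting with all A-endomorphisms.\<close>
definition End0_B :: "('a::ring, 'm) lmod \<Rightarrow> ('m \<Rightarrow> 'm) set" where
  "End0_B M = {T \<in> End0 M. \<forall>b. lhom M M b \<longrightarrow> (\<forall>x\<in>vcarrier M. T (b x) = b (T x))}"

end

theory Submission
  imports Defs "HOL-Library.Function_Algebras"
begin

text \<open>
  Let e_i be the idempotents of the AUF structure.  Every element of A, and every functional
  in G^\<or>, is absorbed by a finite sum f of the e_i.  The cyclic module A f is coherent, so the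
  projective generator G covers it by some \<pi> : G^n \<rightarrow> A f, with \<pi> v = f.

  Injectivity: if a and b act alike on G they act alike on v, so a = a f = b f = b.
  Surjectivity: let T in End^0_{-,B}(G) be absorbed by f and put a = \<pi> (T v).  For \<xi> in G the
  map w \<mapsto> \<pi>(w) \<xi> on G^n is a sum of A-endomorphisms of G, which commute with T; hence
  T \<xi> = T (f \<xi>) = a \<xi>.
  Finite rank: a = a f acts through f G, which is finite-dimensional because G is finitely
  generated and the corners e_i A e_j are.
\<close>

lemma cvs_zero_closed:
  "cvs V \<Longrightarrow> vzero V \<in> vcarrier V"
  unfolding cvs_def by (elim conjE) assumption

lemma cvs_add_closed [rule_format]:
  "cvs V \<Longrightarrow> \<forall>x\<in>vcarrier V. \<forall>y\<in>vcarrier V. vadd V x y \<in> vcarrier V"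
  unfolding cvs_def by (elim conjE) assumption

lemma cvs_sc_closed [rule_format]:
  "cvs V \<Longrightarrow> \<forall>c. \<forall>x\<in>vcarrier V. vsc V c x \<in> vcarrier V"
  unfolding cvs_def by (elim conjE) assumption

lemma cvs_add_assoc [rule_format]:
  "cvs V \<Longrightarrow> \<forall>x\<in>vcarrier V. \<forall>y\<in>vcarrier V. \<forall>z\<in>vcarrier V.
     vadd V (vadd V x y) z = vadd V x (vadd V y z)"
  unfolding cvs_def by (elim conjE) assumption

lemma cvs_add_commute [rule_format]:
  "cvs V \<Longrightarrow> \<forall>x\<in>vcarrier V. \<forall>y\<in>vcarrier V. vadd V x y = vadd V y x"
  unfolding cvs_def by (elim conjE) assumption

lemma cvs_zero_add [rule_format]:
  "cvs V \<Longrightarrow> \<forall>x\<in>vcarrier V. vadd V (vzero V) x = x"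
  unfolding cvs_def by (elim conjE) assumption

lemma cvs_add_inverse [rule_format]:
  "cvs V \<Longrightarrow> \<forall>x\<in>vcarrier V. \<exists>y\<in>vcarrier V. vadd V x y = vzero V"
  unfolding cvs_def by (elim conjE) assumption

lemma cvs_sc_add_right [rule_format]:
  "cvs V \<Longrightarrow> \<forall>c. \<forall>x\<in>vcarrier V. \<forall>y\<in>vcarrier V.
     vsc V c (vadd V x y) = vadd V (vsc V c x) (vsc V c y)"
  unfolding cvs_def by (elim conjE) assumption

lemma cvs_sc_add_left [rule_format]:
  "cvs V \<Longrightarrow> \<forall>c d. \<forall>x\<in>vcarrier V. vsc V (c + d) x = vadd V (vsc V c x) (vsc V d x)"
  unfolding cvs_def by (elim conjE) assumption

lemma cvs_sc_sc [rule_format]: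
  "cvs V \<Longrightarrow> \<forall>c d. \<forall>x\<in>vcarrier V. vsc V c (vsc V d x) = vsc V (c * d) x"
  unfolding cvs_def by (elim conjE) assumption

lemma cvs_sc_one [rule_format]:
  "cvs V \<Longrightarrow> \<forall>x\<in>vcarrier V. vsc V 1 x = x"
  unfolding cvs_def by (elim conjE) assumption

lemma lmodule_cvs:
  "lmodule asc M \<Longrightarrow> cvs M"
  unfolding lmodule_def by (elim conjE) assumption

lemma lmodule_lact_closed [rule_format]:
  "lmodule asc M \<Longrightarrow> \<forall>a. \<forall>x\<in>vcarrier M. lact M a x \<in> vcarrier M"
  unfolding lmodule_def by (elim conjE) assumption

lemma lmodule_lact_add [rule_format]:
  "lmodule asc M \<Longrightarrow> \<forall>a. \<forall>x\<in>vcarrier M. \<forall>y\<in>vcarrier M.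
     lact M a (vadd M x y) = vadd M (lact M a x) (lact M a y)"
  unfolding lmodule_def by (elim conjE) assumption

lemma lmodule_add_lact [rule_format]:
  "lmodule asc M \<Longrightarrow> \<forall>a b. \<forall>x\<in>vcarrier M. lact M (a + b) x = vadd M (lact M a x) (lact M b x)"
  unfolding lmodule_def by (elim conjE) assumption

lemma lmodule_mult_lact [rule_format]:
  "lmodule asc M \<Longrightarrow> \<forall>a b. \<forall>x\<in>vcarrier M. lact M (a * b) x = lact M a (lact M b x)"
  unfolding lmodule_def by (elim conjE) assumption

lemma lmodule_asc_lact [rule_format]:
  "lmodule asc M \<Longrightarrow> \<forall>c a. \<forall>x\<in>vcarrier M. lact M (asc c a) x = vsc M c (lact M a x)"
  unfolding lmodule_def by (elim conjE) assumption

lemma lmodule_lact_sc [rule_format]: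
  "lmodule asc M \<Longrightarrow> \<forall>c a. \<forall>x\<in>vcarrier M. lact M a (vsc M c x) = vsc M c (lact M a x)"
  unfolding lmodule_def by (elim conjE) assumption

lemma lhom_closed [rule_format]:
  "lhom M N f \<Longrightarrow> \<forall>x\<in>vcarrier M. f x \<in> vcarrier N"
  unfolding lhom_def by (elim conjE) assumption

lemma lhom_add [rule_format]:
  "lhom M N f \<Longrightarrow> \<forall>x\<in>vcarrier M. \<forall>y\<in>vcarrier M. f (vadd M x y) = vadd N (f x) (f y)"
  unfolding lhom_def by (elim conjE) assumption

lemma lhom_sc [rule_format]:
  "lhom M N f \<Longrightarrow> \<forall>c. \<forall>x\<in>vcarrier M. f (vsc M c x) = vsc N c (f x)"
  unfolding lhom_def by (elim conjE) assumption

lemma lhom_lact [rule_format]: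
  "lhom M N f \<Longrightarrow> \<forall>a. \<forall>x\<in>vcarrier M. f (lact M a x) = lact N a (f x)"
  unfolding lhom_def by (elim conjE) assumption

lemma cvs_add_zero: "cvs V \<Longrightarrow> x \<in> vcarrier V \<Longrightarrow> vadd V x (vzero V) = x"
  by (metis cvs_zero_closed cvs_add_commute cvs_zero_add)

lemma cvs_add_self_eq_zero:
  assumes V: "cvs V" and x: "x \<in> vcarrier V" and idem: "vadd V x x = x"
  shows "x = vzero V"
proof -
  obtain y where y: "y \<in> vcarrier V" "vadd V x y = vzero V"
    using cvs_add_inverse[OF V x] by blast
  have "vadd V (vadd V x x) y = vadd V x (vadd V x y)"
    using cvs_add_assoc[OF V x x y(1)] .
  then show ?thesis using idem y cvs_add_zero[OF V x] by simp
qed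

lemma cvs_add_add_swap:
  assumes V: "cvs V" and "a \<in> vcarrier V" "b \<in> vcarrier V" "c \<in> vcarrier V" "d \<in> vcarrier V"
  shows "vadd V (vadd V a b) (vadd V c d) = vadd V (vadd V a c) (vadd V b d)"
proof -
  have "vadd V (vadd V a b) (vadd V c d) = vadd V a (vadd V b (vadd V c d))"
    using assms by (simp add: cvs_add_closed cvs_add_assoc)
  also have "vadd V b (vadd V c d) = vadd V c (vadd V b d)"
    using assms by (metis cvs_add_closed cvs_add_assoc cvs_add_commute)
  also have "vadd V a (vadd V c (vadd V b d)) = vadd V (vadd V a c) (vadd V b d)"
    using assms by (simp add: cvs_add_closed cvs_add_assoc)
  finally show ?thesis .
qed

lemma cvs_sc_zero:
  assumes V: "cvs V"
  shows "vsc V c (vzero V) = vzero V"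
proof -
  have "vsc V c (vzero V) = vsc V c (vadd V (vzero V) (vzero V))"
    using cvs_zero_closed[OF V] cvs_zero_add[OF V] by simp
  also have "\<dots> = vadd V (vsc V c (vzero V)) (vsc V c (vzero V))"
    using cvs_zero_closed[OF V] cvs_sc_add_right[OF V] by simp
  finally show ?thesis
    using cvs_add_self_eq_zero[OF V] cvs_zero_closed[OF V] cvs_sc_closed[OF V] by metis
qed

lemma lmodule_lact_zero:
  assumes M: "lmodule asc M"
  shows "lact M a (vzero M) = vzero M"
proof -
  note V = lmodule_cvs[OF M]
  have "lact M a (vzero M) = lact M a (vadd M (vzero M) (vzero M))"
    using cvs_zero_closed[OF V] cvs_zero_add[OF V] by simp
  also have "\<dots> = vadd M (lact M a (vzero M)) (lact M a (vzero M))"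
    using cvs_zero_closed[OF V] lmodule_lact_add[OF M] by simp
  finally show ?thesis
    using cvs_add_self_eq_zero[OF V] cvs_zero_closed[OF V] lmodule_lact_closed[OF M] by metis
qed

lemma lmodule_zero_lact:
  assumes M: "lmodule asc M" and x: "x \<in> vcarrier M"
  shows "lact M 0 x = vzero M"
proof -
  have "lact M 0 x = vadd M (lact M 0 x) (lact M 0 x)"
    using lmodule_add_lact[OF M x, of 0 0] by simp
  then show ?thesis
    using cvs_add_self_eq_zero[OF lmodule_cvs[OF M]] lmodule_lact_closed[OF M x] by metis
qed

lemma lhom_comp:
  "lhom L M f \<Longrightarrow> lhom M N g \<Longrightarrow> lhom L N (g \<circ> f)"
  unfolding lhom_def by auto

lemma calg_vector_space: "is_calg asc \<Longrightarrow> vector_space asc"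
  unfolding is_calg_def by blast

lemma
  assumes "is_calg asc"
  shows calg_asc_add: "asc c (x + y) = asc c x + asc c y"
    and calg_add_asc: "asc (c + d) x = asc c x + asc d x"
    and calg_asc_asc: "asc c (asc d x) = asc (c * d) x"
    and calg_asc_one: "asc 1 x = x"
    and calg_asc_mult_left: "asc c (a * b) = asc c a * b"
    and calg_asc_mult_right: "asc c (a * b) = a * asc c b"
  using vector_space.vector_space_assms[OF calg_vector_space[OF assms]] assms
  unfolding is_calg_def by blast+

lemmas calg_asc_laws =
  calg_asc_add calg_add_asc calg_asc_asc calg_asc_one calg_asc_mult_left calg_asc_mult_right

lemma vsum_list_closed:
  "cvs V \<Longrightarrow> set xs \<subseteq> vcarrier V \<Longrightarrow> vsum_list V xs \<in> vcarrier V"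
  by (induction xs) (auto simp: vsum_list_def cvs_zero_closed cvs_add_closed)

lemma vsum_list_map_add:
  assumes V: "cvs V" and "\<forall>x\<in>set xs. f x \<in> vcarrier V \<and> g x \<in> vcarrier V"
  shows "vsum_list V (map (\<lambda>x. vadd V (f x) (g x)) xs) =
         vadd V (vsum_list V (map f xs)) (vsum_list V (map g xs))"
  using assms(2)
proof (induction xs)
  case Nil
  then show ?case using V by (simp add: vsum_list_def cvs_zero_closed cvs_zero_add)
next
  case (Cons a xs)
  have "vsum_list V (map f xs) \<in> vcarrier V" "vsum_list V (map g xs) \<in> vcarrier V"
    using Cons.prems by (auto intro!: vsum_list_closed[OF V])
  then show ?case
    using Cons cvs_add_add_swap[OF V, of "f a" "g a" "vsum_list V (map f xs)" "vsum_list V (map g xs)"]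
    by (simp add: vsum_list_def)
qed

lemma vsum_list_map_zero: "cvs V \<Longrightarrow> vsum_list V (map (\<lambda>x. vzero V) xs) = vzero V"
  by (induction xs) (auto simp: vsum_list_def cvs_zero_closed cvs_zero_add)

lemma vsum_list_sc:
  assumes V: "cvs V" and "set xs \<subseteq> vcarrier V"
  shows "vsc V c (vsum_list V xs) = vsum_list V (map (vsc V c) xs)"
  using assms(2)
proof (induction xs)
  case Nil
  then show ?case using V by (simp add: vsum_list_def cvs_sc_zero)
next
  case (Cons a xs)
  then show ?case
    using vsum_list_closed[OF V, of xs] V by (simp add: vsum_list_def cvs_sc_add_right)
qed

lemma vsum_list_map_single:
  assumes V: "cvs V" and "distinct xs" "x0 \<in> set xs" "F x0 \<in> vcarrier V"
  shows "vsum_list V (map (\<lambda>x. if x = x0 then F x else vzero V) xs) = F x0"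
  using assms(2,3)
proof (induction xs)
  case Nil
  then show ?case by simp
next
  case (Cons a xs)
  show ?case
  proof (cases "a = x0")
    case True
    then have "map (\<lambda>x. if x = x0 then F x else vzero V) xs = map (\<lambda>x. vzero V) xs"
      using Cons.prems by auto
    then show ?thesis using True vsum_list_map_zero[OF V, of xs] cvs_add_zero[OF V assms(4)]
      by (simp add: vsum_list_def del: map_eq_conv)
  next
    case False
    then show ?thesis
      using Cons V assms(4) by (simp add: vsum_list_def cvs_zero_add)
  qed
qed

lemma lact_vsum_list:
  assumes M: "lmodule asc M" and "set xs \<subseteq> vcarrier M"
  shows "lact M a (vsum_list M xs) = vsum_list M (map (lact M a) xs)"
  using assms(2)
proof (induction xs)
  case Nil
  then show ?case using M by (simp add: vsum_list_def lmodule_lact_zero)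
next
  case (Cons b xs)
  then show ?case
    using vsum_list_closed[OF lmodule_cvs[OF M], of xs] lmodule_lact_add[OF M]
    by (simp add: vsum_list_def)
qed

lemma additive_vsum_list:
  fixes k :: "'m \<Rightarrow> 'c::ab_group_add"
  assumes V: "cvs V"
    and additive: "\<forall>y\<in>vcarrier V. \<forall>y'\<in>vcarrier V. k (vadd V y y') = k y + k y'"
    and ys: "set ys \<subseteq> vcarrier V"
  shows "k (vsum_list V ys) = sum_list (map k ys)"
  using ys
proof (induction ys)
  case Nil
  have "k (vzero V) = k (vzero V) + k (vzero V)"
    using additive cvs_zero_closed[OF V] cvs_zero_add[OF V] by metis
  then show ?case by (simp add: vsum_list_def)
next
  case (Cons a ys)
  then show ?case using additive vsum_list_closed[OF V, of ys] by (simp add: vsum_list_def)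
qed

definition lcomb :: "('a::ring, 'm) lmod \<Rightarrow> 'm list \<Rightarrow> ('m \<Rightarrow> 'a) \<Rightarrow> 'm" where
  "lcomb M xs a = vsum_list M (map (\<lambda>x. lact M (a x) x) xs)"

lemma lcomb_closed:
  "lmodule asc M \<Longrightarrow> set xs \<subseteq> vcarrier M \<Longrightarrow> lcomb M xs a \<in> vcarrier M"
  unfolding lcomb_def
  by (intro vsum_list_closed[OF lmodule_cvs]) (auto intro: lmodule_lact_closed)

lemma lcomb_add:
  assumes M: "lmodule asc M" and xs: "set xs \<subseteq> vcarrier M"
  shows "vadd M (lcomb M xs a) (lcomb M xs b) = lcomb M xs (\<lambda>x. a x + b x)"
proof -
  have "vadd M (lcomb M xs a) (lcomb M xs b) =
      vsum_list M (map (\<lambda>x. vadd M (lact M (a x) x) (lact M (b x) x)) xs)"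
    unfolding lcomb_def using xs lmodule_lact_closed[OF M]
    by (subst vsum_list_map_add[OF lmodule_cvs[OF M]]) (auto simp: o_def)
  also have "\<dots> = lcomb M xs (\<lambda>x. a x + b x)"
    unfolding lcomb_def using xs lmodule_add_lact[OF M]
    by (intro arg_cong[where f="vsum_list M"] map_cong) auto
  finally show ?thesis .
qed

lemma lcomb_sc:
  assumes M: "lmodule asc M" and xs: "set xs \<subseteq> vcarrier M"
  shows "vsc M c (lcomb M xs a) = lcomb M xs (\<lambda>x. asc c (a x))"
proof -
  have "vsc M c (lcomb M xs a) = vsum_list M (map (\<lambda>x. vsc M c (lact M (a x) x)) xs)"
    unfolding lcomb_def using xs lmodule_lact_closed[OF M]
    by (subst vsum_list_sc[OF lmodule_cvs[OF M]]) (auto simp: o_def)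
  also have "\<dots> = lcomb M xs (\<lambda>x. asc c (a x))"
    unfolding lcomb_def using xs lmodule_asc_lact[OF M]
    by (intro arg_cong[where f="vsum_list M"] map_cong) auto
  finally show ?thesis .
qed

lemma lact_lcomb:
  assumes M: "lmodule asc M" and xs: "set xs \<subseteq> vcarrier M"
  shows "lact M d (lcomb M xs a) = lcomb M xs (\<lambda>x. d * a x)"
proof -
  have "lact M d (lcomb M xs a) = vsum_list M (map (\<lambda>x. lact M d (lact M (a x) x)) xs)"
    unfolding lcomb_def using xs lmodule_lact_closed[OF M]
    by (subst lact_vsum_list[OF M]) (auto simp: o_def)
  also have "\<dots> = lcomb M xs (\<lambda>x. d * a x)"
    unfolding lcomb_def using xs lmodule_mult_lact[OF M]
    by (intro arg_cong[where f="vsum_list M"] map_cong) auto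
  finally show ?thesis .
qed

lemma lcomb_zero:
  assumes M: "lmodule asc M" and xs: "set xs \<subseteq> vcarrier M"
  shows "lcomb M xs (\<lambda>_. 0) = vzero M"
proof -
  have "map (\<lambda>x. lact M 0 x) xs = map (\<lambda>x. vzero M) xs"
    using xs lmodule_zero_lact[OF M] by auto
  then show ?thesis
    unfolding lcomb_def by (simp add: vsum_list_map_zero[OF lmodule_cvs[OF M]] del: map_eq_conv)
qed

lemma lcomb_single:
  assumes M: "lmodule asc M" and xs: "set xs \<subseteq> vcarrier M" "distinct xs" and x0: "x0 \<in> set xs"
  shows "lcomb M xs (\<lambda>x. if x = x0 then b else 0) = lact M b x0"
proof -
  have eq: "map (\<lambda>x. lact M (if x = x0 then b else 0) x) xs =
      map (\<lambda>x. if x = x0 then lact M b x else vzero M) xs"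
    using xs(1) lmodule_zero_lact[OF M] by (intro map_cong) auto
  have "lact M b x0 \<in> vcarrier M"
    using lmodule_lact_closed[OF M] xs(1) x0 by blast
  then show ?thesis
    unfolding lcomb_def eq by (rule vsum_list_map_single[OF lmodule_cvs[OF M] xs(2) x0])
qed

lemma coherent_generators:
  assumes M: "lmodule asc G" and C: "coherent G"
  obtains xs and b :: "'m \<Rightarrow> 'a::ring"
  where "set xs \<subseteq> vcarrier G" "\<forall>x\<in>set xs. lact G (b x) x = x"
    and "\<forall>y\<in>vcarrier G. \<exists>a. y = lcomb G xs a"
proof -
  obtain S where S: "finite S" "S \<subseteq> vcarrier G"
    and generates: "\<forall>N. submodule G N \<and> S \<subseteq> N \<longrightarrow> N = vcarrier G"
    using C unfolding coherent_def fin_gen_def by blast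
  obtain xs where xs: "set xs = S" "distinct xs"
    using finite_distinct_list[OF S(1)] by blast
  obtain b where b: "\<forall>x\<in>set xs. lact G (b x) x = x"
    using C S(2) xs(1) bchoice[of "set xs" "\<lambda>x b. lact G b x = x"]
    unfolding coherent_def quasicoherent_def by blast
  have xsC: "set xs \<subseteq> vcarrier G" using S(2) xs(1) by simp
  define N where "N = range (lcomb G xs)"
  have "submodule G N"
    unfolding submodule_def N_def
  proof (intro conjI ballI allI)
    show "range (lcomb G xs) \<subseteq> vcarrier G" "vzero G \<in> range (lcomb G xs)"
      using lcomb_closed[OF M xsC] lcomb_zero[OF M xsC] by (blast, metis rangeI)
  next
    fix y z assume "y \<in> range (lcomb G xs)" "z \<in> range (lcomb G xs)"
    then show "vadd G y z \<in> range (lcomb G xs)" by (auto simp: lcomb_add[OF M xsC])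
  next
    fix c y assume "y \<in> range (lcomb G xs)"
    then show "vsc G c y \<in> range (lcomb G xs)" by (auto simp: lcomb_sc[OF M xsC])
  next
    fix d y assume "y \<in> range (lcomb G xs)"
    then show "lact G d y \<in> range (lcomb G xs)" by (auto simp: lact_lcomb[OF M xsC])
  qed
  moreover have "set xs \<subseteq> N"
  proof
    fix x0 assume x0: "x0 \<in> set xs"
    have "lcomb G xs (\<lambda>x. if x = x0 then b x0 else 0) = x0"
      using lcomb_single[OF M xsC xs(2) x0] b x0 by simp
    then show "x0 \<in> N" unfolding N_def by (metis rangeI)
  qed
  ultimately have "N = vcarrier G" using generates xs(1) by blast
  then show ?thesis using that[OF xsC b] unfolding N_def by blast
qed

section \<open>Local units of AUF algebras\<close>

definition auf_system :: "(complex \<Rightarrow> 'a::ring \<Rightarrow> 'a) \<Rightarrow> 'a set \<Rightarrow> ('a \<Rightarrow> 'a) \<Rightarrow> bool" where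
  "auf_system asc I e \<longleftrightarrow>
     (\<forall>i\<in>I. idem (e i)) \<and>
     (\<forall>i\<in>I. \<forall>j\<in>I. i \<noteq> j \<longrightarrow> e i * e j = 0) \<and>
     (\<forall>i\<in>I. \<forall>j\<in>I. \<exists>B. finite B \<and> {e i * a * e j |a. True} \<subseteq> module.span asc B) \<and>
     (\<forall>a. \<exists>F x. finite F \<and> F \<subseteq> I \<times> I \<and> a = (\<Sum>(i, j)\<in>F. e i * x (i, j) * e j))"

lemma AUF_iff_auf_system: "AUF asc \<longleftrightarrow> (\<exists>I e. auf_system asc I e)"
  unfolding AUF_def auf_system_def by blast

lemma auf_system_idem [rule_format]: "auf_system asc I e \<Longrightarrow> \<forall>i\<in>I. idem (e i)"
  unfolding auf_system_def by (elim conjE) assumption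

lemma auf_system_orthogonal [rule_format]:
  "auf_system asc I e \<Longrightarrow> \<forall>i\<in>I. \<forall>j\<in>I. i \<noteq> j \<longrightarrow> e i * e j = 0"
  unfolding auf_system_def by (elim conjE) assumption

lemma auf_system_corner_finite_dim [rule_format]:
  "auf_system asc I e \<Longrightarrow>
     \<forall>i\<in>I. \<forall>j\<in>I. \<exists>B. finite B \<and> {e i * a * e j |a. True} \<subseteq> module.span asc B"
  unfolding auf_system_def by (elim conjE) assumption

lemma auf_system_decomp:
  assumes "auf_system asc I e"
  obtains F y where "finite F" "F \<subseteq> I \<times> I" "x = (\<Sum>(i, j)\<in>F. e i * y (i, j) * e j)"
proof -
  have "\<forall>a. \<exists>F x. finite F \<and> F \<subseteq> I \<times> I \<and> a = (\<Sum>(i, j)\<in>F. e i * x (i, j) * e j)"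
    using assms unfolding auf_system_def by (elim conjE) assumption
  then show ?thesis using that by blast
qed

definition idem_sum :: "('i \<Rightarrow> 'a::ring) \<Rightarrow> 'i set \<Rightarrow> 'a" where
  "idem_sum e J = (\<Sum>j\<in>J. e j)"

lemma idem_sum_mult:
  assumes D: "auf_system asc I e" and J: "finite J" "J \<subseteq> I" "j \<in> J"
  shows "idem_sum e J * e j = e j" "e j * idem_sum e J = e j"
proof -
  have idem: "e j * e j = e j"
    using auf_system_idem[OF D] J unfolding idem_def by blast
  have orth: "e k * e j = 0" "e j * e k = 0" if "k \<in> J - {j}" for k
    using auf_system_orthogonal[OF D] J that by blast+
  have "idem_sum e J * e j = e j * e j + (\<Sum>k\<in>J - {j}. e k * e j)"
    unfolding idem_sum_def using J by (simp add: sum.remove distrib_right sum_distrib_right)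
  then show "idem_sum e J * e j = e j" using idem orth(1) by simp
  have "e j * idem_sum e J = e j * e j + (\<Sum>k\<in>J - {j}. e j * e k)"
    unfolding idem_sum_def using J by (simp add: sum.remove distrib_left sum_distrib_left)
  then show "e j * idem_sum e J = e j" using idem orth(2) by simp
qed

lemma idem_sum_absorb:
  assumes D: "auf_system asc I e" and J: "finite J" "J \<subseteq> I"
    and F: "fst ` F \<subseteq> J" "snd ` F \<subseteq> J" and x: "x = (\<Sum>(i, j)\<in>F. e i * y (i, j) * e j)"
  shows "idem_sum e J * x = x" "x * idem_sum e J = x"
proof -
  have "idem_sum e J * x = (\<Sum>(i, j)\<in>F. (idem_sum e J * e i) * y (i, j) * e j)"
    unfolding x by (simp add: sum_distrib_left case_prod_beta mult.assoc)
  also have "\<dots> = x"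
    unfolding x using F idem_sum_mult(1)[OF D J] by (intro sum.cong) force+
  finally show "idem_sum e J * x = x" .
  have "x * idem_sum e J = (\<Sum>(i, j)\<in>F. e i * y (i, j) * (e j * idem_sum e J))"
    unfolding x by (simp add: sum_distrib_right case_prod_beta mult.assoc)
  also have "\<dots> = x"
    unfolding x using F idem_sum_mult(2)[OF D J] by (intro sum.cong) force+
  finally show "x * idem_sum e J = x" .
qed

lemma idem_sum_absorb_subset:
  assumes D: "auf_system asc I e" and J: "finite J" "J \<subseteq> I" and J': "J' \<subseteq> J"
  shows "idem_sum e J * idem_sum e J' = idem_sum e J'" "idem_sum e J' * idem_sum e J = idem_sum e J'"
proof -
  have "idem_sum e J * idem_sum e J' = (\<Sum>j\<in>J'. idem_sum e J * e j)"
    unfolding idem_sum_def[of e J'] by (rule sum_distrib_left)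
  also have "\<dots> = idem_sum e J'"
    unfolding idem_sum_def[of e J'] using idem_sum_mult(1)[OF D J] J' by (intro sum.cong) auto
  finally show "idem_sum e J * idem_sum e J' = idem_sum e J'" .
  have "idem_sum e J' * idem_sum e J = (\<Sum>j\<in>J'. e j * idem_sum e J)"
    unfolding idem_sum_def[of e J'] by (rule sum_distrib_right)
  also have "\<dots> = idem_sum e J'"
    unfolding idem_sum_def[of e J'] using idem_sum_mult(2)[OF D J] J' by (intro sum.cong) auto
  finally show "idem_sum e J' * idem_sum e J = idem_sum e J'" .
qed

lemma idem_sum_idem:
  "auf_system asc I e \<Longrightarrow> finite J \<Longrightarrow> J \<subseteq> I \<Longrightarrow> idem (idem_sum e J)"
  unfolding idem_def by (rule idem_sum_absorb_subset(1)) auto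

lemma auf_system_local_unit:
  assumes D: "auf_system asc I e" and X: "finite X"
  obtains J where "finite J" "J \<subseteq> I" "\<forall>x\<in>X. idem_sum e J * x = x \<and> x * idem_sum e J = x"
proof -
  have "\<forall>x. \<exists>J. finite J \<and> J \<subseteq> I \<and> idem_sum e J * x = x \<and> x * idem_sum e J = x"
  proof
    fix x
    obtain F y where F: "finite F" "F \<subseteq> I \<times> I" "x = (\<Sum>(i, j)\<in>F. e i * y (i, j) * e j)"
      using auf_system_decomp[OF D] .
    define J where "J = fst ` F \<union> snd ` F"
    have J: "finite J" "J \<subseteq> I" unfolding J_def using F(1,2) by auto
    show "\<exists>J. finite J \<and> J \<subseteq> I \<and> idem_sum e J * x = x \<and> x * idem_sum e J = x"
      using idem_sum_absorb[OF D J _ _ F(3)] J unfolding J_def by blast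
  qed
  from choice[OF this] obtain Jx where Jx: "\<forall>x. finite (Jx x) \<and> Jx x \<subseteq> I
      \<and> idem_sum e (Jx x) * x = x \<and> x * idem_sum e (Jx x) = x"
    by blast
  define J where "J = (\<Union>x\<in>X. Jx x)"
  have J: "finite J" "J \<subseteq> I" unfolding J_def using X Jx by auto
  have "idem_sum e J * x = x \<and> x * idem_sum e J = x" if "x \<in> X" for x
  proof -
    have sub: "Jx x \<subseteq> J" unfolding J_def using that by blast
    have "idem_sum e J * x = (idem_sum e J * idem_sum e (Jx x)) * x"
      using Jx by (simp add: mult.assoc)
    moreover have "x * idem_sum e J = x * (idem_sum e (Jx x) * idem_sum e J)"
      using Jx by (metis mult.assoc)
    ultimately show ?thesis using idem_sum_absorb_subset[OF D J sub] Jx by simp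
  qed
  then show ?thesis using that J by blast
qed

lemma auf_system_corner_span:
  assumes A: "is_calg asc" and D: "auf_system asc I e" and J: "finite J" "J \<subseteq> I"
  obtains B where "finite B" "\<forall>c. idem_sum e J * c * b \<in> module.span asc B"
proof -
  interpret A: vector_space asc using calg_vector_space[OF A] .
  obtain F z where F: "finite F" "F \<subseteq> I \<times> I" "b = (\<Sum>(i, j)\<in>F. e i * z (i, j) * e j)"
    using auf_system_decomp[OF D] .
  have "\<forall>p\<in>I \<times> I. \<exists>B. finite B \<and> {e (fst p) * a * e (snd p) |a. True} \<subseteq> module.span asc B"
    using auf_system_corner_finite_dim[OF D] by auto
  from bchoice[OF this] obtain Bp where Bp: "\<forall>p\<in>I \<times> I. finite (Bp p)
      \<and> {e (fst p) * a * e (snd p) |a. True} \<subseteq> module.span asc (Bp p)"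
    by blast
  have pair_in: "(j, snd p) \<in> I \<times> I" if "j \<in> J" "p \<in> F" for j p
    using that J(2) F(2) by auto
  define B where "B = (\<Union>j\<in>J. \<Union>p\<in>F. Bp (j, snd p))"
  have "finite B"
    unfolding B_def using J(1) F(1) Bp pair_in by (intro finite_UN_I) auto
  moreover have "idem_sum e J * c * b \<in> module.span asc B" for c
  proof -
    have "b = (\<Sum>p\<in>F. e (fst p) * z p * e (snd p))"
      using F(3) by (simp add: case_prod_beta)
    then have "idem_sum e J * c * b = (\<Sum>p\<in>F. \<Sum>j\<in>J. e j * (c * e (fst p) * z p) * e (snd p))"
      unfolding idem_sum_def by (simp add: sum_distrib_left sum_distrib_right mult.assoc)
    also have "\<dots> \<in> module.span asc B"
    proof (intro A.span_sum)
      fix p j assume p: "p \<in> F" and j: "j \<in> J"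
      have "e j * (c * e (fst p) * z p) * e (snd p) \<in> module.span asc (Bp (j, snd p))"
        using Bp pair_in[OF j p] by fastforce
      moreover have "Bp (j, snd p) \<subseteq> B" unfolding B_def using p j by blast
      ultimately show "e j * (c * e (fst p) * z p) * e (snd p) \<in> module.span asc B"
        using A.span_mono by blast
    qed
    finally show ?thesis .
  qed
  ultimately show ?thesis using that by blast
qed

section \<open>Embedding a coherent projective module into a function space\<close>

definition image_mod :: "('m \<Rightarrow> 'n) \<Rightarrow> ('a, 'm) lmod \<Rightarrow> ('a, 'n) lmod" where
  "image_mod j M = \<lparr>vcarrier = j ` vcarrier M,
     vadd = \<lambda>u v. j (vadd M (inv j u) (inv j v)),
     vzero = j (vzero M),
     vsc = \<lambda>c u. j (vsc M c (inv j u)),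
     lact = \<lambda>a u. j (lact M a (inv j u))\<rparr>"

lemma image_mod_simps [simp]:
  "vcarrier (image_mod j M) = j ` vcarrier M"
  "vadd (image_mod j M) u v = j (vadd M (inv j u) (inv j v))"
  "vzero (image_mod j M) = j (vzero M)"
  "vsc (image_mod j M) c u = j (vsc M c (inv j u))"
  "lact (image_mod j M) a u = j (lact M a (inv j u))"
  by (simp_all add: image_mod_def)

lemma image_mod_lmodule:
  assumes j: "inj j" and M: "lmodule asc M"
  shows "lmodule asc (image_mod j M)"
proof -
  note V = lmodule_cvs[OF M]
  have "cvs (image_mod j M)"
    unfolding cvs_def
  proof (intro conjI ballI allI)
    fix x assume "x \<in> vcarrier (image_mod j M)"
    then obtain x' where x': "x' \<in> vcarrier M" "x = j x'" by auto
    then obtain y' where "y' \<in> vcarrier M" "vadd M x' y' = vzero M"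
      using cvs_add_inverse[OF V] by blast
    then show "\<exists>y\<in>vcarrier (image_mod j M). vadd (image_mod j M) x y = vzero (image_mod j M)"
      using x' j by (intro bexI[of _ "j y'"]) auto
  qed (use j in \<open>auto simp: cvs_zero_closed[OF V] cvs_add_closed[OF V] cvs_sc_closed[OF V]
      cvs_add_assoc[OF V] cvs_zero_add[OF V] cvs_sc_add_right[OF V] cvs_sc_add_left[OF V]
      cvs_sc_sc[OF V] cvs_sc_one[OF V], metis cvs_add_commute[OF V]\<close>)
  then show ?thesis
    unfolding lmodule_def using j
    by (auto simp: lmodule_lact_closed[OF M] lmodule_lact_add[OF M] lmodule_add_lact[OF M]
        lmodule_mult_lact[OF M] lmodule_asc_lact[OF M] lmodule_lact_sc[OF M]
        cvs_add_closed[OF V] cvs_sc_closed[OF V])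
qed

lemma lhom_image_mod: "inj j \<Longrightarrow> lhom M (image_mod j M) j"
  unfolding lhom_def by simp

text \<open>The complex component only makes room for an injection of 'g into the carrier type
  'g \<Rightarrow> complex \<times> 'a on which projective_mod tests lifting; A acts on it by zero.\<close>

definition fun_mod :: "(complex \<Rightarrow> 'a::ring \<Rightarrow> 'a) \<Rightarrow> ('a, 'g \<Rightarrow> complex \<times> 'a) lmod" where
  "fun_mod asc = \<lparr>vcarrier = UNIV,
     vadd = \<lambda>u v g. (fst (u g) + fst (v g), snd (u g) + snd (v g)),
     vzero = \<lambda>g. (0, 0),
     vsc = \<lambda>c u g. (c * fst (u g), asc c (snd (u g))),
     lact = \<lambda>a u g. (0, a * snd (u g))\<rparr>"

lemma fun_mod_simps [simp]:
  "vcarrier (fun_mod asc) = UNIV"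
  "vadd (fun_mod asc) u v = (\<lambda>g. (fst (u g) + fst (v g), snd (u g) + snd (v g)))"
  "vzero (fun_mod asc) = (\<lambda>g. (0, 0))"
  "vsc (fun_mod asc) c u = (\<lambda>g. (c * fst (u g), asc c (snd (u g))))"
  "lact (fun_mod asc) a u = (\<lambda>g. (0, a * snd (u g)))"
  by (simp_all add: fun_mod_def)

lemma fun_mod_lmodule:
  assumes A: "is_calg asc"
  shows "lmodule asc (fun_mod asc :: ('a::ring, 'g \<Rightarrow> complex \<times> 'a) lmod)"
proof -
  have "\<exists>y. (\<lambda>g. (fst (x g) + fst (y g), snd (x g) + snd (y g))) = (\<lambda>g. (0::complex, 0::'a))"
    for x :: "'g \<Rightarrow> complex \<times> 'a"
    by (intro exI[of _ "\<lambda>g. (- fst (x g), - snd (x g))"]) auto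
  then have "cvs (fun_mod asc :: ('a, 'g \<Rightarrow> complex \<times> 'a) lmod)"
    unfolding cvs_def
    by (auto simp: calg_asc_laws[OF A] add.assoc add.commute distrib_right distrib_left)
  moreover have "a * asc c b = asc c a * b" for a b c
    using calg_asc_mult_left[OF A] calg_asc_mult_right[OF A] by metis
  ultimately show ?thesis
    unfolding lmodule_def by (auto simp: calg_asc_laws[OF A] distrib_left distrib_right mult.assoc)
qed

definition delta_fun :: "'g \<Rightarrow> 'g \<Rightarrow> complex \<times> 'a::ring" where
  "delta_fun g = (\<lambda>g'. if g' = g then (1, 0) else (0, 0))"

lemma inj_delta_fun: "inj (delta_fun :: 'g \<Rightarrow> 'g \<Rightarrow> complex \<times> 'a::ring)"
proof (rule injI)
  fix x y :: 'g
  assume "delta_fun x = (delta_fun y :: 'g \<Rightarrow> complex \<times> 'a)"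
  then have "(delta_fun x :: 'g \<Rightarrow> complex \<times> 'a) x = delta_fun y x" by simp
  then show "x = y" unfolding delta_fun_def by (auto split: if_splits)
qed

definition fun_asc :: "(complex \<Rightarrow> 'a \<Rightarrow> 'a) \<Rightarrow> complex \<Rightarrow> ('g \<Rightarrow> 'a) \<Rightarrow> 'g \<Rightarrow> 'a" where
  "fun_asc asc c u = (\<lambda>g. asc c (u g))"

lemma coherent_quotient_of_fun_mod:
  fixes G :: "('a::ring, 'g) lmod"
  assumes M: "lmodule asc G" and C: "coherent G"
  obtains s :: "('g \<Rightarrow> complex \<times> 'a) \<Rightarrow> 'g"
  where "lhom (fun_mod asc) G s" "s ` vcarrier (fun_mod asc) = vcarrier G"
    and "\<And>u u'. (\<lambda>g. snd (u g)) = (\<lambda>g. snd (u' g)) \<Longrightarrow> s u = s u'"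
proof -
  obtain xs b where xs: "set xs \<subseteq> vcarrier G" and "\<forall>x\<in>set xs. lact G (b x) x = x"
    and spans: "\<forall>y\<in>vcarrier G. \<exists>a. y = lcomb G xs a"
    by (rule coherent_generators[OF M C])
  define s where "s u = lcomb G xs (\<lambda>x. snd (u x))" for u :: "'g \<Rightarrow> complex \<times> 'a"
  have s: "lhom (fun_mod asc) G s"
    unfolding lhom_def s_def
    using lcomb_closed[OF M xs] lcomb_add[OF M xs] lcomb_sc[OF M xs] lact_lcomb[OF M xs]
    by simp
  moreover have "s ` vcarrier (fun_mod asc) = vcarrier G"
  proof
    show "s ` vcarrier (fun_mod asc) \<subseteq> vcarrier G" using lhom_closed[OF s] by blast
    show "vcarrier G \<subseteq> s ` vcarrier (fun_mod asc)"
    proof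
      fix y assume "y \<in> vcarrier G"
      then obtain a where "y = lcomb G xs a" using spans by blast
      then have "y = s (\<lambda>g. (0, a g))" unfolding s_def by simp
      then show "y \<in> s ` vcarrier (fun_mod asc)" by simp
    qed
  qed
  moreover have "s u = s u'" if "(\<lambda>g. snd (u g)) = (\<lambda>g. snd (u' g))" for u u'
    unfolding s_def using that by simp
  ultimately show ?thesis using that by blast
qed

text \<open>This is the only use of projectivity: it embeds G A-linearly into a genuine vector_space
  (projective_coherent_embedding), where bases and coordinate functionals are available.  Lifting
  is only tested on the carrier type 'g \<Rightarrow> complex \<times> 'a, so G is transported there along
  delta_fun.\<close>

lemma projective_mod_split:
  fixes asc :: "complex \<Rightarrow> 'a::ring \<Rightarrow> 'a" and G :: "('a, 'g) lmod"
    and s :: "('g \<Rightarrow> complex \<times> 'a) \<Rightarrow> 'g"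
  assumes A: "is_calg asc" and M: "lmodule asc G" and P: "projective_mod asc G"
    and s: "lhom (fun_mod asc) G s" and onto: "s ` vcarrier (fun_mod asc) = vcarrier G"
  obtains h where "lhom G (fun_mod asc) h" "\<forall>x\<in>vcarrier G. s (h x) = x"
proof -
  define G' where "G' = image_mod (delta_fun :: 'g \<Rightarrow> 'g \<Rightarrow> complex \<times> 'a) G"
  have F: "lmodule asc (fun_mod asc :: ('a, 'g \<Rightarrow> complex \<times> 'a) lmod)"
    by (rule fun_mod_lmodule[OF A])
  have G': "lmodule asc G'"
    unfolding G'_def by (rule image_mod_lmodule[OF inj_delta_fun M])
  have delta: "lhom G G' delta_fun"
    unfolding G'_def by (rule lhom_image_mod[OF inj_delta_fun])
  have p: "lhom (fun_mod asc) G' (delta_fun \<circ> s)"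
    by (rule lhom_comp[OF s delta])
  have p_onto: "(delta_fun \<circ> s) ` vcarrier (fun_mod asc) = vcarrier G'"
    unfolding G'_def image_mod_simps(1) image_comp[symmetric] onto ..
  have "\<exists>h. lhom G (fun_mod asc) h
      \<and> (\<forall>x\<in>vcarrier G. (delta_fun \<circ> s) (h x) = (delta_fun x :: 'g \<Rightarrow> complex \<times> 'a))"
    by (rule P[unfolded projective_mod_def, rule_format, of _ G']) (intro conjI F G' p p_onto delta)
  then obtain h where h: "lhom G (fun_mod asc) h"
    and "\<forall>x\<in>vcarrier G. delta_fun (s (h x)) = (delta_fun x :: 'g \<Rightarrow> complex \<times> 'a)"
    by auto
  moreover have "inj (delta_fun :: 'g \<Rightarrow> 'g \<Rightarrow> complex \<times> 'a)" by (rule inj_delta_fun)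
  ultimately have "\<forall>x\<in>vcarrier G. s (h x) = x" by (simp add: inj_eq)
  then show ?thesis using that h by blast
qed

lemma projective_coherent_embedding:
  fixes asc :: "complex \<Rightarrow> 'a::ring \<Rightarrow> 'a" and G :: "('a, 'g) lmod"
  assumes A: "is_calg asc" and M: "lmodule asc G" and C: "coherent G"
    and P: "projective_mod asc G"
  obtains k :: "'g \<Rightarrow> 'g \<Rightarrow> 'a"
  where "inj_on k (vcarrier G)"
    and "\<forall>y\<in>vcarrier G. \<forall>y'\<in>vcarrier G. k (vadd G y y') = k y + k y'"
    and "\<forall>c. \<forall>y\<in>vcarrier G. k (vsc G c y) = fun_asc asc c (k y)"
    and "\<forall>a. \<forall>y\<in>vcarrier G. k (lact G a y) = (\<lambda>g. a * k y g)"
proof -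
  obtain s :: "('g \<Rightarrow> complex \<times> 'a) \<Rightarrow> 'g"
    where s: "lhom (fun_mod asc) G s" "s ` vcarrier (fun_mod asc) = vcarrier G"
    and s_snd: "\<And>u u'. (\<lambda>g. snd (u g)) = (\<lambda>g. snd (u' g)) \<Longrightarrow> s u = s u'"
    using coherent_quotient_of_fun_mod[OF M C] by blast
  obtain h where h: "lhom G (fun_mod asc) h" "\<forall>x\<in>vcarrier G. s (h x) = x"
    by (rule projective_mod_split[OF A M P s])
  define k where "k y = (\<lambda>g. snd (h y g))" for y
  have "inj_on k (vcarrier G)"
  proof (rule inj_onI)
    fix y y' assume "y \<in> vcarrier G" "y' \<in> vcarrier G" "k y = k y'"
    then show "y = y'" using h(2) s_snd[of "h y" "h y'"] unfolding k_def by metis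
  qed
  moreover have "\<forall>y\<in>vcarrier G. \<forall>y'\<in>vcarrier G. k (vadd G y y') = k y + k y'"
    using lhom_add[OF h(1)] unfolding k_def by (auto simp: plus_fun_def)
  moreover have "\<forall>c. \<forall>y\<in>vcarrier G. k (vsc G c y) = fun_asc asc c (k y)"
    using lhom_sc[OF h(1)] unfolding k_def fun_asc_def by auto
  moreover have "\<forall>a. \<forall>y\<in>vcarrier G. k (lact G a y) = (\<lambda>g. a * k y g)"
    using lhom_lact[OF h(1)] unfolding k_def by auto
  ultimately show ?thesis using that by blast
qed

section \<open>Left multiplications have finite rank\<close>

lemma (in module) span_sum_list: "\<forall>v\<in>set vs. v \<in> span Z \<Longrightarrow> sum_list vs \<in> span Z"
  by (induction vs) (auto intro: span_add span_zero)

lemma fun_asc_vector_space: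
  "is_calg asc \<Longrightarrow> vector_space (fun_asc asc :: complex \<Rightarrow> ('g \<Rightarrow> 'a::ring) \<Rightarrow> 'g \<Rightarrow> 'a)"
  by unfold_locales (auto simp: fun_asc_def calg_asc_laws plus_fun_def)

lemma mult_fun_span:
  assumes A: "is_calg asc" and c: "c \<in> module.span asc B"
  shows "(\<lambda>g. c * (w :: 'g \<Rightarrow> 'a::ring) g) \<in> module.span (fun_asc asc) ((\<lambda>c g. c * w g) ` B)"
proof -
  have pair: "vector_space_pair asc (fun_asc asc :: complex \<Rightarrow> ('g \<Rightarrow> 'a) \<Rightarrow> _)"
    unfolding vector_space_pair_def using calg_vector_space[OF A] fun_asc_vector_space[OF A] by blast
  have "Vector_Spaces.linear asc (fun_asc asc) (\<lambda>c g. c * w g)"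
    unfolding Vector_Spaces.linear_iff
    using calg_vector_space[OF A] fun_asc_vector_space[OF A]
    by (auto simp: fun_asc_def plus_fun_def distrib_right calg_asc_mult_left[OF A])
  from vector_space_pair.linear_span_image[OF pair this]
  have "module.span (fun_asc asc) ((\<lambda>c g. c * w g) ` B) = (\<lambda>c g. c * w g) ` module.span asc B" .
  then show ?thesis using c by blast
qed

lemma lcomb_absorb_units:
  assumes M: "lmodule asc G" and xs: "set xs \<subseteq> vcarrier G"
    and b: "\<forall>x\<in>set xs. lact G (b x) x = x"
  shows "lcomb G xs a = lcomb G xs (\<lambda>x. a x * b x)"
proof -
  have "lact G (a x) x = lact G (a x * b x) x" if "x \<in> set xs" for x
    using that xs b lmodule_mult_lact[OF M] by auto
  then show ?thesis
    unfolding lcomb_def by (intro arg_cong[where f="vsum_list G"] map_cong) auto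
qed

lemma additive_lcomb:
  fixes k :: "'m \<Rightarrow> 'g \<Rightarrow> 'a::ring"
  assumes M: "lmodule asc G" and xs: "set xs \<subseteq> vcarrier G"
    and additive: "\<forall>y\<in>vcarrier G. \<forall>y'\<in>vcarrier G. k (vadd G y y') = k y + k y'"
    and lact: "\<forall>a. \<forall>y\<in>vcarrier G. k (lact G a y) = (\<lambda>g. a * k y g)"
  shows "k (lcomb G xs a) = sum_list (map (\<lambda>x g. a x * k x g) xs)"
proof -
  have "k (lcomb G xs a) = sum_list (map (\<lambda>x. k (lact G (a x) x)) xs)"
    unfolding lcomb_def using xs lmodule_lact_closed[OF M]
    by (subst additive_vsum_list[OF lmodule_cvs[OF M] additive]) (auto simp: o_def)
  also have "\<dots> = sum_list (map (\<lambda>x g. a x * k x g) xs)"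
    using xs lact by (intro arg_cong[where f=sum_list] map_cong) auto
  finally show ?thesis .
qed

lemma coherent_idem_sum_finite_span:
  fixes asc :: "complex \<Rightarrow> 'a::ring \<Rightarrow> 'a" and G :: "('a, 'g) lmod" and k :: "'g \<Rightarrow> 'g \<Rightarrow> 'a"
  assumes A: "is_calg asc" and D: "auf_system asc I e" and M: "lmodule asc G" and C: "coherent G"
    and additive: "\<forall>y\<in>vcarrier G. \<forall>y'\<in>vcarrier G. k (vadd G y y') = k y + k y'"
    and lact: "\<forall>a. \<forall>y\<in>vcarrier G. k (lact G a y) = (\<lambda>g. a * k y g)"
    and J: "finite J" "J \<subseteq> I"
  obtains Z where "finite Z"
    "\<forall>y\<in>vcarrier G. k (lact G (idem_sum e J) y) \<in> module.span (fun_asc asc) Z"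
proof -
  interpret F: vector_space "fun_asc asc :: complex \<Rightarrow> ('g \<Rightarrow> 'a) \<Rightarrow> _"
    using fun_asc_vector_space[OF A] .
  define f where "f = idem_sum e J"
  obtain xs b where xs: "set xs \<subseteq> vcarrier G" and b: "\<forall>x\<in>set xs. lact G (b x) x = x"
    and spans: "\<forall>y\<in>vcarrier G. \<exists>a. y = lcomb G xs a"
    by (rule coherent_generators[OF M C])
  have "\<forall>x. \<exists>B. finite B \<and> (\<forall>c. f * c * b x \<in> module.span asc B)"
  proof
    fix x
    show "\<exists>B. finite B \<and> (\<forall>c. f * c * b x \<in> module.span asc B)"
      unfolding f_def by (rule auf_system_corner_span[OF A D J]) blast
  qed
  from choice[OF this] obtain B
    where B: "\<forall>x. finite (B x) \<and> (\<forall>c. f * c * b x \<in> module.span asc (B x))"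
    by blast
  define mult_k where "mult_k x = (\<lambda>c g. c * k x g)" for x
  define Z where "Z = (\<Union>x\<in>set xs. mult_k x ` B x)"
  have "finite Z" unfolding Z_def using B by blast
  moreover have term_in_span: "mult_k x (f * c * b x) \<in> F.span Z" if x: "x \<in> set xs" for x c
  proof -
    have "mult_k x (f * c * b x) \<in> F.span (mult_k x ` B x)"
      unfolding mult_k_def using B mult_fun_span[OF A] by blast
    also have "\<dots> \<subseteq> F.span Z" unfolding Z_def using x by (intro F.span_mono) blast
    finally show ?thesis .
  qed
  moreover have "k (lact G f y) \<in> F.span Z" if y: "y \<in> vcarrier G" for y
  proof -
    obtain a where a: "y = lcomb G xs a" using spans y by blast
    have "lact G f y = lcomb G xs (\<lambda>x. f * a x * b x)"
      using a lcomb_absorb_units[OF M xs b, of a] lact_lcomb[OF M xs] by (simp add: mult.assoc)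
    then have "k (lact G f y) = sum_list (map (\<lambda>x. mult_k x (f * a x * b x)) xs)"
      unfolding mult_k_def using additive_lcomb[OF M xs additive lact] by simp
    then show ?thesis
      using term_in_span by (simp only:) (intro F.span_sum_list, auto)
  qed
  ultimately show ?thesis using that unfolding f_def by blast
qed

lemma representation_dual0:
  fixes asc :: "complex \<Rightarrow> 'a::ring \<Rightarrow> 'a" and G :: "('a, 'g) lmod" and k :: "'g \<Rightarrow> 'g \<Rightarrow> 'a"
  assumes A: "is_calg asc" and M: "lmodule asc G" and f: "idem f"
    and additive: "\<forall>y\<in>vcarrier G. \<forall>y'\<in>vcarrier G. k (vadd G y y') = k y + k y'"
    and sc: "\<forall>c. \<forall>y\<in>vcarrier G. k (vsc G c y) = fun_asc asc c (k y)"
    and \<beta>: "\<not> module.dependent (fun_asc asc) \<beta>"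
    and in_span: "\<And>y. y \<in> vcarrier G \<Longrightarrow> k (lact G f y) \<in> module.span (fun_asc asc) \<beta>"
  shows "(\<lambda>y. module.representation (fun_asc asc) \<beta> (k (lact G f y)) w) \<in> dual0 G"
proof -
  interpret F: vector_space "fun_asc asc :: complex \<Rightarrow> ('g \<Rightarrow> 'a) \<Rightarrow> _"
    using fun_asc_vector_space[OF A] .
  show ?thesis
    unfolding dual0_def
  proof (intro CollectI conjI ballI allI)
    fix x y assume xy: "x \<in> vcarrier G" "y \<in> vcarrier G"
    have "k (lact G f (vadd G x y)) = k (lact G f x) + k (lact G f y)"
      using xy lmodule_lact_closed[OF M] lmodule_lact_add[OF M] additive by simp
    then show "F.representation \<beta> (k (lact G f (vadd G x y))) w =
        F.representation \<beta> (k (lact G f x)) w + F.representation \<beta> (k (lact G f y)) w"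
      using F.representation_add[OF \<beta> in_span[OF xy(2)] in_span[OF xy(1)]] by simp
  next
    fix c x assume x: "x \<in> vcarrier G"
    have "k (lact G f (vsc G c x)) = fun_asc asc c (k (lact G f x))"
      using x lmodule_lact_closed[OF M] lmodule_lact_sc[OF M] sc by simp
    then show "F.representation \<beta> (k (lact G f (vsc G c x))) w =
        c * F.representation \<beta> (k (lact G f x)) w"
      using F.representation_scale[OF \<beta> in_span[OF x]] by simp
  next
    show "\<exists>e. idem e \<and> (\<forall>y\<in>vcarrier G.
        F.representation \<beta> (k (lact G f (lact G e y))) w = F.representation \<beta> (k (lact G f y)) w)"
      using f unfolding idem_def by (intro exI[of _ f]) (simp flip: lmodule_mult_lact[OF M])
  qed
qed

lemma finite_rank_of_finite_span:
  fixes asc :: "complex \<Rightarrow> 'a::ring \<Rightarrow> 'a" and G :: "('a, 'g) lmod" and k :: "'g \<Rightarrow> 'g \<Rightarrow> 'a"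
  assumes A: "is_calg asc" and M: "lmodule asc G" and f: "idem f"
    and inj: "inj_on k (vcarrier G)"
    and additive: "\<forall>y\<in>vcarrier G. \<forall>y'\<in>vcarrier G. k (vadd G y y') = k y + k y'"
    and sc: "\<forall>c. \<forall>y\<in>vcarrier G. k (vsc G c y) = fun_asc asc c (k y)"
    and Z: "finite Z" "\<forall>y\<in>vcarrier G. k (lact G f y) \<in> module.span (fun_asc asc) Z"
  obtains ps :: "(('g \<Rightarrow> complex) \<times> 'g) list"
  where "set ps \<subseteq> dual0 G \<times> vcarrier G"
    and "\<forall>y\<in>vcarrier G. lact G f y = vsum_list G (map (\<lambda>(\<phi>, \<xi>). vsc G (\<phi> y) \<xi>) ps)"
proof -
  note V = lmodule_cvs[OF M]
  interpret F: vector_space "fun_asc asc :: complex \<Rightarrow> ('g \<Rightarrow> 'a) \<Rightarrow> _"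
    using fun_asc_vector_space[OF A] .
  define W where "W = (\<lambda>y. k (lact G f y)) ` vcarrier G"
  obtain \<beta> where \<beta>: "\<beta> \<subseteq> W" "F.independent \<beta>" "W \<subseteq> F.span \<beta>"
    using F.maximal_independent_subset[of W] by blast
  have "finite \<beta>"
    using F.independent_span_bound[OF Z(1) \<beta>(2)] \<beta>(1) Z(2) unfolding W_def by blast
  then obtain bs where bs: "set bs = \<beta>" "distinct bs" by (rule finite_distinct_list[THEN exE]) blast
  have "\<forall>w\<in>\<beta>. \<exists>y. y \<in> vcarrier G \<and> w = k (lact G f y)" using \<beta>(1) unfolding W_def by blast
  from bchoice[OF this] obtain y_of
    where y_of: "\<forall>w\<in>\<beta>. y_of w \<in> vcarrier G \<and> w = k (lact G f (y_of w))"
    by blast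
  define g where "g w = lact G f (y_of w)" for w
  have gC: "g w \<in> vcarrier G" and kg: "k (g w) = w" if "w \<in> \<beta>" for w
    using y_of that lmodule_lact_closed[OF M] unfolding g_def by auto
  have in_span: "k (lact G f y) \<in> F.span \<beta>" if "y \<in> vcarrier G" for y
    using \<beta>(3) that unfolding W_def by blast
  define \<phi> where "\<phi> w y = F.representation \<beta> (k (lact G f y)) w" for w y
  have "\<phi> w \<in> dual0 G" for w
    unfolding \<phi>_def using representation_dual0[OF A M f additive sc \<beta>(2) in_span] .
  moreover have "lact G f y = vsum_list G (map (\<lambda>w. vsc G (\<phi> w y) (g w)) bs)"
    if y: "y \<in> vcarrier G" for y
  proof -
    have sum_C: "vsum_list G (map (\<lambda>w. vsc G (\<phi> w y) (g w)) bs) \<in> vcarrier G"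
      using bs gC cvs_sc_closed[OF V] by (intro vsum_list_closed[OF V]) auto
    have "k (lact G f y) = (\<Sum>w\<in>\<beta>. fun_asc asc (\<phi> w y) w)"
      unfolding \<phi>_def
      using F.sum_representation_eq[OF \<beta>(2) in_span[OF y] \<open>finite \<beta>\<close> order_refl] by simp
    also have "\<dots> = sum_list (map (\<lambda>w. k (vsc G (\<phi> w y) (g w))) bs)"
      using bs gC kg sc by (simp add: sum_list_distinct_conv_sum_set)
    also have "\<dots> = k (vsum_list G (map (\<lambda>w. vsc G (\<phi> w y) (g w)) bs))"
      using bs gC cvs_sc_closed[OF V]
      by (subst additive_vsum_list[OF V additive]) (auto simp: o_def)
    finally show ?thesis
      using inj sum_C y lmodule_lact_closed[OF M] by (meson inj_onD)
  qed
  moreover have "set (map (\<lambda>w. (\<phi> w, g w)) bs) \<subseteq> dual0 G \<times> vcarrier G"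
    using calculation(1) bs gC by auto
  ultimately show ?thesis
    using that[of "map (\<lambda>w. (\<phi> w, g w)) bs"] by (simp add: o_def)
qed

lemma lact_in_End0:
  fixes asc :: "complex \<Rightarrow> 'a::ring \<Rightarrow> 'a" and G :: "('a, 'g) lmod"
  assumes A: "is_calg asc" and D: "auf_system asc I e" and M: "lmodule asc G"
    and C: "coherent G" and P: "projective_mod asc G"
  shows "lact G a \<in> End0 G"
proof -
  note V = lmodule_cvs[OF M]
  obtain k :: "'g \<Rightarrow> 'g \<Rightarrow> 'a" where inj: "inj_on k (vcarrier G)"
    and additive: "\<forall>y\<in>vcarrier G. \<forall>y'\<in>vcarrier G. k (vadd G y y') = k y + k y'"
    and sc: "\<forall>c. \<forall>y\<in>vcarrier G. k (vsc G c y) = fun_asc asc c (k y)"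
    and lact: "\<forall>a. \<forall>y\<in>vcarrier G. k (lact G a y) = (\<lambda>g. a * k y g)"
    by (rule projective_coherent_embedding[OF A M C P])
  obtain J where J: "finite J" "J \<subseteq> I" and "\<forall>x\<in>{a}. idem_sum e J * x = x \<and> x * idem_sum e J = x"
    by (rule auf_system_local_unit[OF D, of "{a}"]) auto
  then have unit: "a * idem_sum e J = a" by simp
  obtain Z where "finite Z"
    "\<forall>y\<in>vcarrier G. k (lact G (idem_sum e J) y) \<in> module.span (fun_asc asc) Z"
    by (rule coherent_idem_sum_finite_span[OF A D M C additive lact J])
  then obtain ps where ps: "set ps \<subseteq> dual0 G \<times> vcarrier G"
    and rank: "\<forall>y\<in>vcarrier G. lact G (idem_sum e J) y = vsum_list G (map (\<lambda>(\<phi>, \<xi>). vsc G (\<phi> y) \<xi>) ps)"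
    by (rule finite_rank_of_finite_span[OF A M idem_sum_idem[OF D J] inj additive sc])
  define cs where "cs = map (\<lambda>(\<phi>, \<xi>). (1::complex, \<phi>, lact G a \<xi>)) ps"
  have "lact G a y = vsum_list G (map (\<lambda>(c, \<phi>, \<xi>). vsc G (c * \<phi> y) \<xi>) cs)"
    if y: "y \<in> vcarrier G" for y
  proof -
    have "lact G a y = lact G a (lact G (idem_sum e J) y)"
      using unit lmodule_mult_lact[OF M y] by metis
    also have "\<dots> = lact G a (vsum_list G (map (\<lambda>(\<phi>, \<xi>). vsc G (\<phi> y) \<xi>) ps))"
      using rank y by simp
    also have "\<dots> = vsum_list G (map (\<lambda>(\<phi>, \<xi>). lact G a (vsc G (\<phi> y) \<xi>)) ps)"
      using ps cvs_sc_closed[OF V]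
      by (subst lact_vsum_list[OF M]) (auto simp: o_def split_def)
    also have "\<dots> = vsum_list G (map (\<lambda>(c, \<phi>, \<xi>). vsc G (c * \<phi> y) \<xi>) cs)"
      unfolding cs_def using ps lmodule_lact_sc[OF M]
      by (auto simp: o_def case_prod_beta subset_iff intro!: arg_cong[where f="vsum_list G"])
    finally show ?thesis .
  qed
  moreover have "\<forall>(c, \<phi>, \<xi>)\<in>set cs. \<phi> \<in> dual0 G \<and> \<xi> \<in> vcarrier G"
    unfolding cs_def using ps lmodule_lact_closed[OF M] by auto
  ultimately show ?thesis unfolding End0_def by blast
qed

lemma End0E:
  assumes "T \<in> End0 G"
  obtains cs where "\<And>c \<phi> \<xi>. (c, \<phi>, \<xi>) \<in> set cs \<Longrightarrow> \<phi> \<in> dual0 G"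
    and "\<And>c \<phi> \<xi>. (c, \<phi>, \<xi>) \<in> set cs \<Longrightarrow> \<xi> \<in> vcarrier G"
    and "\<And>y. y \<in> vcarrier G \<Longrightarrow> T y = vsum_list G (map (\<lambda>(c, \<phi>, \<xi>). vsc G (c * \<phi> y) \<xi>) cs)"
proof -
  obtain cs where cs: "\<forall>(c, \<phi>, \<xi>)\<in>set cs. \<phi> \<in> dual0 G \<and> \<xi> \<in> vcarrier G"
    and "\<forall>y\<in>vcarrier G. T y = vsum_list G (map (\<lambda>(c, \<phi>, \<xi>). vsc G (c * \<phi> y) \<xi>) cs)"
    using assms unfolding End0_def by blast
  moreover have "\<phi> \<in> dual0 G" "\<xi> \<in> vcarrier G" if "(c, \<phi>, \<xi>) \<in> set cs" for c \<phi> \<xi>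
    using cs that by fastforce+
  ultimately show ?thesis using that[of cs] by simp
qed

lemma End0_closed:
  assumes M: "lmodule asc G" and T: "T \<in> End0 G" and y: "y \<in> vcarrier G"
  shows "T y \<in> vcarrier G"
proof -
  note V = lmodule_cvs[OF M]
  obtain cs where "\<And>c \<phi> \<xi>. (c, \<phi>, \<xi>) \<in> set cs \<Longrightarrow> \<xi> \<in> vcarrier G"
    and "T y = vsum_list G (map (\<lambda>(c, \<phi>, \<xi>). vsc G (c * \<phi> y) \<xi>) cs)"
    using End0E[OF T] y by metis
  then show ?thesis using cvs_sc_closed[OF V] by (auto intro!: vsum_list_closed[OF V])
qed

lemma End0_add:
  fixes G :: "('a::ring, 'm) lmod"
  assumes M: "lmodule asc G" and T: "T \<in> End0 G" and x: "x \<in> vcarrier G" and y: "y \<in> vcarrier G"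
  shows "T (vadd G x y) = vadd G (T x) (T y)"
proof -
  note V = lmodule_cvs[OF M]
  obtain cs where \<phi>: "\<And>c \<phi> \<xi>. (c, \<phi>, \<xi>) \<in> set cs \<Longrightarrow> \<phi> \<in> dual0 G"
    and \<xi>: "\<And>c \<phi> \<xi>. (c, \<phi>, \<xi>) \<in> set cs \<Longrightarrow> \<xi> \<in> vcarrier G"
    and rep: "\<And>y. y \<in> vcarrier G \<Longrightarrow> T y = vsum_list G (map (\<lambda>(c, \<phi>, \<xi>). vsc G (c * \<phi> y) \<xi>) cs)"
    using End0E[OF T] by metis
  define F where "F y = (\<lambda>(c, \<phi>, \<xi>). vsc G (c * \<phi> y) \<xi>)" for y :: 'm
  have F_closed: "F y t \<in> vcarrier G" if t: "t \<in> set cs" for y t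
  proof -
    obtain c \<phi>' \<xi>' where t': "t = (c, \<phi>', \<xi>')" by (cases t)
    then show ?thesis using \<xi>[of c \<phi>' \<xi>'] t cvs_sc_closed[OF V] unfolding F_def by simp
  qed
  have "F (vadd G x y) t = vadd G (F x t) (F y t)" if t: "t \<in> set cs" for t
  proof -
    obtain c \<phi>' \<xi>' where t': "t = (c, \<phi>', \<xi>')" by (cases t)
    have "\<phi>' (vadd G x y) = \<phi>' x + \<phi>' y" using \<phi> t t' x y unfolding dual0_def by blast
    then show ?thesis
      unfolding F_def t' using \<xi> t t' cvs_sc_add_left[OF V] by (simp add: distrib_left)
  qed
  then have "map (F (vadd G x y)) cs = map (\<lambda>t. vadd G (F x t) (F y t)) cs"
    by (rule map_cong[OF refl])
  then have "T (vadd G x y) = vsum_list G (map (\<lambda>t. vadd G (F x t) (F y t)) cs)"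
    using rep cvs_add_closed[OF V x y] unfolding F_def[symmetric] by (simp del: map_eq_conv)
  also have "\<dots> = vadd G (T x) (T y)"
    using vsum_list_map_add[OF V, of cs "F x" "F y"] F_closed rep[OF x] rep[OF y]
    unfolding F_def[symmetric] by simp
  finally show ?thesis .
qed

lemma End0_zero:
  assumes M: "lmodule asc G" and T: "T \<in> End0 G"
  shows "T (vzero G) = vzero G"
proof -
  note V = lmodule_cvs[OF M]
  have "T (vzero G) = vadd G (T (vzero G)) (T (vzero G))"
    using End0_add[OF M T] cvs_zero_closed[OF V] cvs_zero_add[OF V] by metis
  then show ?thesis
    using cvs_add_self_eq_zero[OF V] End0_closed[OF M T] cvs_zero_closed[OF V] by metis
qed

text \<open>Each functional of T is invariant under some idempotent; a local unit absorbing these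
  finitely many idempotents makes T itself invariant.\<close>

lemma End0_idem_sum_invariant:
  assumes M: "lmodule asc G" and D: "auf_system asc I e" and T: "T \<in> End0 G"
  obtains J where "finite J" "J \<subseteq> I" "\<forall>y\<in>vcarrier G. T (lact G (idem_sum e J) y) = T y"
proof -
  obtain cs where \<phi>: "\<And>c \<phi> \<xi>. (c, \<phi>, \<xi>) \<in> set cs \<Longrightarrow> \<phi> \<in> dual0 G"
    and rep: "\<And>y. y \<in> vcarrier G \<Longrightarrow> T y = vsum_list G (map (\<lambda>(c, \<phi>, \<xi>). vsc G (c * \<phi> y) \<xi>) cs)"
    using End0E[OF T] by metis
  have "\<exists>u. idem u \<and> (\<forall>y\<in>vcarrier G. fst (snd t) (lact G u y) = fst (snd t) y)"
    if "t \<in> set cs" for t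
    using \<phi>[of "fst t" "fst (snd t)" "snd (snd t)"] that unfolding dual0_def by simp
  then have "\<forall>t\<in>set cs. \<exists>u. idem u \<and> (\<forall>y\<in>vcarrier G. fst (snd t) (lact G u y) = fst (snd t) y)"
    by blast
  from bchoice[OF this] obtain E
    where E: "\<forall>t\<in>set cs. \<forall>y\<in>vcarrier G. fst (snd t) (lact G (E t) y) = fst (snd t) y"
    by blast
  obtain J where J: "finite J" "J \<subseteq> I"
    and unit: "\<forall>x\<in>E ` set cs. idem_sum e J * x = x \<and> x * idem_sum e J = x"
    by (rule auf_system_local_unit[OF D, of "E ` set cs"]) auto
  have "T (lact G (idem_sum e J) y) = T y" if y: "y \<in> vcarrier G" for y
  proof -
    have fy: "lact G (idem_sum e J) y \<in> vcarrier G" using y lmodule_lact_closed[OF M] by blast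
    have \<phi>_inv: "\<phi> (lact G (idem_sum e J) y) = \<phi> y" if t: "(c, \<phi>, \<xi>) \<in> set cs" for c \<phi> \<xi>
    proof -
      let ?u = "E (c, \<phi>, \<xi>)"
      have inv: "\<forall>y\<in>vcarrier G. \<phi> (lact G ?u y) = \<phi> y" using E t by fastforce
      have "?u * idem_sum e J = ?u" using unit t by blast
      then have "lact G ?u (lact G (idem_sum e J) y) = lact G ?u y"
        using lmodule_mult_lact[OF M y] by metis
      then show ?thesis using inv fy y by metis
    qed
    have "map (\<lambda>(c, \<phi>, \<xi>). vsc G (c * \<phi> (lact G (idem_sum e J) y)) \<xi>) cs =
        map (\<lambda>(c, \<phi>, \<xi>). vsc G (c * \<phi> y) \<xi>) cs"
    proof (intro map_cong refl)
      fix t assume t: "t \<in> set cs"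
      obtain c \<phi>' \<xi>' where t': "t = (c, \<phi>', \<xi>')" by (cases t)
      show "(case t of (c, \<phi>, \<xi>) \<Rightarrow> vsc G (c * \<phi> (lact G (idem_sum e J) y)) \<xi>) =
          (case t of (c, \<phi>, \<xi>) \<Rightarrow> vsc G (c * \<phi> y) \<xi>)"
        using \<phi>_inv[of c \<phi>' \<xi>'] t t' by simp
    qed
    then show ?thesis by (simp only: rep[OF y] rep[OF fy])
  qed
  then show ?thesis using that J by blast
qed

section \<open>Direct powers and cyclic modules\<close>

lemma dsum_pow_simps [simp]:
  "vcarrier (dsum_pow G n) = {f. (\<forall>i<n. f i \<in> vcarrier G) \<and> (\<forall>i\<ge>n. f i = vzero G)}"
  "vadd (dsum_pow G n) u v = (\<lambda>i. vadd G (u i) (v i))"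
  "vzero (dsum_pow G n) = (\<lambda>i. vzero G)"
  "vsc (dsum_pow G n) c u = (\<lambda>i. vsc G c (u i))"
  "lact (dsum_pow G n) a u = (\<lambda>i. lact G a (u i))"
  by (simp_all add: dsum_pow_def)

lemma dsum_pow_component_closed:
  "lmodule asc G \<Longrightarrow> v \<in> vcarrier (dsum_pow G n) \<Longrightarrow> v i \<in> vcarrier G"
  using cvs_zero_closed[OF lmodule_cvs] by (cases "i < n") auto

definition dsum_single :: "('a, 'g) lmod \<Rightarrow> nat \<Rightarrow> 'g \<Rightarrow> nat \<Rightarrow> 'g" where
  "dsum_single G k x = (\<lambda>i. if i = k then x else vzero G)"

definition dsum_trunc :: "('a, 'g) lmod \<Rightarrow> nat \<Rightarrow> (nat \<Rightarrow> 'g) \<Rightarrow> nat \<Rightarrow> 'g" where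
  "dsum_trunc G k u = (\<lambda>i. if i < k then u i else vzero G)"

lemma lhom_dsum_single:
  assumes M: "lmodule asc G" and k: "k < n"
  shows "lhom G (dsum_pow G n) (dsum_single G k)"
  unfolding lhom_def dsum_single_def
  using k cvs_zero_closed[OF lmodule_cvs[OF M]] cvs_zero_add[OF lmodule_cvs[OF M]]
    cvs_sc_zero[OF lmodule_cvs[OF M]] lmodule_lact_zero[OF M]
  by auto

lemma dsum_trunc_closed:
  "lmodule asc G \<Longrightarrow> u \<in> vcarrier (dsum_pow G n) \<Longrightarrow> dsum_trunc G k u \<in> vcarrier (dsum_pow G n)"
  unfolding dsum_trunc_def using cvs_zero_closed[OF lmodule_cvs] by auto

lemma dsum_trunc_full:
  "u \<in> vcarrier (dsum_pow G n) \<Longrightarrow> dsum_trunc G n u = u"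
  unfolding dsum_trunc_def by (auto simp: not_less)

lemma dsum_trunc_Suc:
  assumes M: "lmodule asc G" and u: "u \<in> vcarrier (dsum_pow G n)"
  shows "dsum_trunc G (Suc k) u = vadd (dsum_pow G n) (dsum_trunc G k u) (dsum_single G k (u k))"
  unfolding dsum_trunc_def dsum_single_def
  using dsum_pow_component_closed[OF M u] cvs_zero_add[OF lmodule_cvs[OF M]]
    cvs_add_zero[OF lmodule_cvs[OF M]] cvs_zero_closed[OF lmodule_cvs[OF M]]
  by (intro ext) (auto simp: less_Suc_eq)

lemma lhom_dsum_pow_zero:
  assumes M: "lmodule asc G" and N: "lmodule asc N" and h: "lhom (dsum_pow G n) N h"
  shows "h (\<lambda>i. vzero G) = vzero N"
proof -
  have zero: "(\<lambda>i. vzero G) \<in> vcarrier (dsum_pow G n)"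
    using cvs_zero_closed[OF lmodule_cvs[OF M]] by simp
  have "lact (dsum_pow G n) 0 (\<lambda>i. vzero G) = (\<lambda>i. vzero G)"
    using lmodule_zero_lact[OF M cvs_zero_closed[OF lmodule_cvs[OF M]]] by simp
  then have "h (\<lambda>i. vzero G) = h (lact (dsum_pow G n) 0 (\<lambda>i. vzero G))" by simp
  also have "\<dots> = lact N 0 (h (\<lambda>i. vzero G))" by (rule lhom_lact[OF h zero])
  also have "\<dots> = vzero N" by (rule lmodule_zero_lact[OF N lhom_closed[OF h zero]])
  finally show ?thesis .
qed

text \<open>Composing h with the inclusion of one summand gives an endomorphism of G, which T
  commutes with; induct over the summands.\<close>

lemma commute_dsum_pow:
  assumes M: "lmodule asc G"
    and T_closed: "\<And>y. y \<in> vcarrier G \<Longrightarrow> T y \<in> vcarrier G"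
    and T_add: "\<And>x y. x \<in> vcarrier G \<Longrightarrow> y \<in> vcarrier G \<Longrightarrow> T (vadd G x y) = vadd G (T x) (T y)"
    and T_zero: "T (vzero G) = vzero G"
    and comm: "\<And>b x. lhom G G b \<Longrightarrow> x \<in> vcarrier G \<Longrightarrow> T (b x) = b (T x)"
    and h: "lhom (dsum_pow G n) G h" and w: "w \<in> vcarrier (dsum_pow G n)"
  shows "T (h w) = h (\<lambda>i. if i < n then T (w i) else vzero G)"
proof -
  define Tw where "Tw = (\<lambda>i. if i < n then T (w i) else vzero G)"
  have wC: "w i \<in> vcarrier G" for i using dsum_pow_component_closed[OF M w] .
  have TwC: "Tw \<in> vcarrier (dsum_pow G n)" unfolding Tw_def using wC T_closed by auto
  have single_closed: "dsum_single G k x \<in> vcarrier (dsum_pow G n)" if "k < n" "x \<in> vcarrier G" for k x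
    using lhom_closed[OF lhom_dsum_single[OF M that(1)] that(2)] .
  have "k \<le> n \<longrightarrow> T (h (dsum_trunc G k w)) = h (dsum_trunc G k Tw)" for k
  proof (induction k)
    case 0
    then show ?case
      unfolding dsum_trunc_def using lhom_dsum_pow_zero[OF M M h] T_zero by simp
  next
    case (Suc k)
    show ?case
    proof
      assume "Suc k \<le> n"
      then have k: "k < n" by simp
      have "h (dsum_trunc G (Suc k) w) = vadd G (h (dsum_trunc G k w)) (h (dsum_single G k (w k)))"
        unfolding dsum_trunc_Suc[OF M w]
        by (rule lhom_add[OF h dsum_trunc_closed[OF M w] single_closed[OF k wC]])
      then have "T (h (dsum_trunc G (Suc k) w)) =
          vadd G (T (h (dsum_trunc G k w))) (T (h (dsum_single G k (w k))))"
        using T_add lhom_closed[OF h] dsum_trunc_closed[OF M w] single_closed[OF k wC] by simp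
      also have "\<dots> = vadd G (h (dsum_trunc G k Tw)) (h (dsum_single G k (Tw k)))"
        using Suc.IH k comm[OF lhom_comp[OF lhom_dsum_single[OF M k] h] wC]
        by (simp add: Tw_def)
      also have "\<dots> = h (dsum_trunc G (Suc k) Tw)"
        unfolding dsum_trunc_Suc[OF M TwC]
        by (rule lhom_add[OF h dsum_trunc_closed[OF M TwC]
              single_closed[OF k dsum_pow_component_closed[OF M TwC]], symmetric])
      finally show "T (h (dsum_trunc G (Suc k) w)) = h (dsum_trunc G (Suc k) Tw)" .
    qed
  qed
  then have "T (h (dsum_trunc G n w)) = h (dsum_trunc G n Tw)" by blast
  then have "T (h w) = h Tw" by (simp only: dsum_trunc_full[OF w] dsum_trunc_full[OF TwC])
  then show ?thesis unfolding Tw_def .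
qed

text \<open>proj_generator tests coherent modules only on carriers of type (nat \<Rightarrow> 'a) set, so the
  element x of the cyclic module A f is encoded as {\<lambda>_. x}.\<close>

definition const_set :: "'a \<Rightarrow> (nat \<Rightarrow> 'a) set" where
  "const_set x = {\<lambda>_. x}"

definition the_const :: "(nat \<Rightarrow> 'a) set \<Rightarrow> 'a" where
  "the_const X = (SOME g. g \<in> X) 0"

lemma the_const_const_set [simp]: "the_const (const_set x) = x"
  unfolding const_set_def the_const_def by simp

lemma const_set_eq_iff [simp]: "const_set x = const_set y \<longleftrightarrow> x = y"
  unfolding const_set_def by (metis singleton_inject)

definition cyclic_mod :: "(complex \<Rightarrow> 'a::ring \<Rightarrow> 'a) \<Rightarrow> 'a \<Rightarrow> ('a, (nat \<Rightarrow> 'a) set) lmod" where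
  "cyclic_mod asc f = \<lparr>vcarrier = const_set ` {c * f |c. True},
     vadd = \<lambda>X Y. const_set (the_const X + the_const Y),
     vzero = const_set 0,
     vsc = \<lambda>c X. const_set (asc c (the_const X)),
     lact = \<lambda>a X. const_set (a * the_const X)\<rparr>"

lemma cyclic_mod_simps [simp]:
  "vcarrier (cyclic_mod asc f) = const_set ` {c * f |c. True}"
  "vadd (cyclic_mod asc f) X Y = const_set (the_const X + the_const Y)"
  "vzero (cyclic_mod asc f) = const_set 0"
  "vsc (cyclic_mod asc f) s X = const_set (asc s (the_const X))"
  "lact (cyclic_mod asc f) a X = const_set (a * the_const X)"
  by (simp_all add: cyclic_mod_def)

lemma cyclic_mod_lmodule:
  assumes A: "is_calg asc"
  shows "lmodule asc (cyclic_mod asc f)"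
proof -
  let ?P = "{c * f |c. True}"
  have "0 \<in> ?P" by (rule CollectI, rule exI[of _ 0]) simp
  moreover have "x + y \<in> ?P" if "x \<in> ?P" "y \<in> ?P" for x y
    using that by (auto simp: distrib_right[symmetric])
  moreover have "asc s x \<in> ?P" if "x \<in> ?P" for x s
    using that calg_asc_mult_left[OF A] by auto
  moreover have "\<exists>y. (\<exists>c. y = c * f) \<and> x + y = 0" if x: "x \<in> ?P" for x
  proof -
    obtain c where "x = c * f" using x by blast
    then show ?thesis by (intro exI[of _ "- x"] conjI exI[of _ "- c"]) auto
  qed
  ultimately have "cvs (cyclic_mod asc f)"
    unfolding cvs_def by (simp, intro conjI) (auto simp: calg_asc_laws[OF A] add.assoc)
  moreover have "a * (asc c c' * f) = asc c a * (c' * f)" for a c c'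
    by (metis calg_asc_mult_left[OF A] calg_asc_mult_right[OF A] mult.assoc)
  moreover have "const_set (a * (c * f)) \<in> const_set ` ?P" for a c
    by (auto simp: mult.assoc[symmetric])
  ultimately show ?thesis
    unfolding lmodule_def by (auto simp: mult.assoc distrib_left distrib_right calg_asc_laws[OF A])
qed

lemma cyclic_mod_coherent:
  assumes D: "auf_system asc I e" and f: "idem f"
  shows "coherent (cyclic_mod asc f)"
  unfolding coherent_def
proof
  show "quasicoherent (cyclic_mod asc f)"
    unfolding quasicoherent_def
  proof
    fix X assume "X \<in> vcarrier (cyclic_mod asc f)"
    then obtain c where c: "X = const_set (c * f)" by auto
    obtain J where "\<forall>x\<in>{c}. idem_sum e J * x = x \<and> x * idem_sum e J = x"
      by (rule auf_system_local_unit[OF D, of "{c}"]) auto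
    then have "lact (cyclic_mod asc f) (idem_sum e J) X = X"
      unfolding c by (simp add: mult.assoc[symmetric])
    then show "\<exists>a. lact (cyclic_mod asc f) a X = X" by blast
  qed
  have "f = f * f" using f unfolding idem_def by simp
  then have "const_set f \<in> vcarrier (cyclic_mod asc f)" by auto
  moreover have "N = vcarrier (cyclic_mod asc f)"
    if N: "submodule (cyclic_mod asc f) N" "const_set f \<in> N" for N
  proof -
    have "const_set (c * f) \<in> N" for c
      using N unfolding submodule_def by (metis cyclic_mod_simps(5) the_const_const_set)
    then show ?thesis using N unfolding submodule_def by auto
  qed
  ultimately show "fin_gen (cyclic_mod asc f)"
    unfolding fin_gen_def by (intro exI[of _ "{const_set f}"]) auto
qed

lemma cyclic_mod_eval_lhom:
  assumes M: "lmodule asc G" and y: "y \<in> vcarrier G"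
  shows "lhom (cyclic_mod asc f) G (\<lambda>X. lact G (the_const X) y)"
  unfolding lhom_def
  using lmodule_lact_closed[OF M y] lmodule_add_lact[OF M y] lmodule_asc_lact[OF M y]
    lmodule_mult_lact[OF M y]
  by simp

lemma proj_generator_covers_cyclic:
  assumes A: "is_calg asc" and D: "auf_system asc I e" and G: "proj_generator asc G" and f: "idem f"
  obtains n \<pi> v where "lhom (dsum_pow G n) (cyclic_mod asc f) \<pi>"
    "v \<in> vcarrier (dsum_pow G n)" "\<pi> v = const_set f"
proof -
  obtain n \<pi> where \<pi>: "lhom (dsum_pow G n) (cyclic_mod asc f) \<pi>"
    "\<pi> ` vcarrier (dsum_pow G n) = vcarrier (cyclic_mod asc f)"
    using G cyclic_mod_lmodule[OF A] cyclic_mod_coherent[OF D f]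
    unfolding proj_generator_def is_quotient_of_def by blast
  have "f = f * f" using f unfolding idem_def by simp
  then have "const_set f \<in> vcarrier (cyclic_mod asc f)" by auto
  then obtain v where "v \<in> vcarrier (dsum_pow G n)" "\<pi> v = const_set f"
    using \<pi>(2) by (metis imageE)
  then show ?thesis using that \<pi>(1) by blast
qed

section \<open>The representation of A on G\<close>

lemma proj_generator_lact_inj:
  assumes A: "is_calg asc" and D: "auf_system asc I e" and G: "proj_generator asc G"
    and eq: "\<forall>x\<in>vcarrier G. lact G a x = lact G b x"
  shows "a = b"
proof -
  have M: "lmodule asc G" using G unfolding proj_generator_def by blast
  obtain J where J: "finite J" "J \<subseteq> I"
    and unit: "\<forall>x\<in>{a, b}. idem_sum e J * x = x \<and> x * idem_sum e J = x"
    by (rule auf_system_local_unit[OF D, of "{a, b}"]) auto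
  define f where "f = idem_sum e J"
  obtain n \<pi> v where \<pi>: "lhom (dsum_pow G n) (cyclic_mod asc f) \<pi>"
    and v: "v \<in> vcarrier (dsum_pow G n)" "\<pi> v = const_set f"
    using proj_generator_covers_cyclic[OF A D G idem_sum_idem[OF D J]] unfolding f_def by blast
  have "const_set (a * f) = \<pi> (lact (dsum_pow G n) a v)"
    using lhom_lact[OF \<pi> v(1)] v(2) by (simp del: dsum_pow_simps)
  also have "lact (dsum_pow G n) a v = lact (dsum_pow G n) b v"
    using eq dsum_pow_component_closed[OF M v(1)] by auto
  also have "\<pi> (lact (dsum_pow G n) b v) = const_set (b * f)"
    using lhom_lact[OF \<pi> v(1)] v(2) by (simp del: dsum_pow_simps)
  finally have "const_set (a * f) = const_set (b * f)" .
  then show ?thesis using unit unfolding f_def by simp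
qed

lemma End0_B_eq_lact:
  fixes asc :: "complex \<Rightarrow> 'a::ring \<Rightarrow> 'a" and G :: "('a, 'g) lmod"
  assumes A: "is_calg asc" and D: "auf_system asc I e" and G: "proj_generator asc G"
    and T: "T \<in> End0_B G"
  obtains a where "\<forall>x\<in>vcarrier G. T x = lact G a x"
proof -
  have M: "lmodule asc G" using G unfolding proj_generator_def by blast
  have T0: "T \<in> End0 G" and comm: "\<And>b x. lhom G G b \<Longrightarrow> x \<in> vcarrier G \<Longrightarrow> T (b x) = b (T x)"
    using T unfolding End0_B_def by blast+
  obtain J where J: "finite J" "J \<subseteq> I"
    and invariant: "\<forall>y\<in>vcarrier G. T (lact G (idem_sum e J) y) = T y"
    by (rule End0_idem_sum_invariant[OF M D T0])
  define f where "f = idem_sum e J"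
  obtain n \<pi> v where \<pi>: "lhom (dsum_pow G n) (cyclic_mod asc f) \<pi>"
    and v: "v \<in> vcarrier (dsum_pow G n)" "\<pi> v = const_set f"
    using proj_generator_covers_cyclic[OF A D G idem_sum_idem[OF D J]] unfolding f_def by blast
  define Tv where "Tv = (\<lambda>i. if i < n then T (v i) else vzero G)"
  have "T x = lact G (the_const (\<pi> Tv)) x" if x: "x \<in> vcarrier G" for x
  proof -
    define h where "h = (\<lambda>X. lact G (the_const X) x) \<circ> \<pi>"
    have h: "lhom (dsum_pow G n) G h"
      unfolding h_def by (rule lhom_comp[OF \<pi> cyclic_mod_eval_lhom[OF M x]])
    have "T x = T (h v)"
      using invariant x v(2) unfolding h_def f_def by simp
    also have "\<dots> = h Tv"
      unfolding Tv_def
      by (rule commute_dsum_pow[OF M End0_closed[OF M T0] End0_add[OF M T0] End0_zero[OF M T0]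
            comm h v(1)])
    finally show ?thesis unfolding h_def by simp
  qed
  then show ?thesis using that by blast
qed

theorem theorem11p7:
  fixes asc :: "complex \<Rightarrow> 'a::ring \<Rightarrow> 'a"
    and G :: "('a, 'g) lmod"
  assumes "is_calg asc"
    and "strongly_AUF asc"
    and "proj_generator asc G"
  shows "(\<forall>a. lact G a \<in> End0_B G)
    \<and> (\<forall>a b. \<forall>x\<in>vcarrier G. lact G (a + b) x = vadd G (lact G a x) (lact G b x))
    \<and> (\<forall>c a. \<forall>x\<in>vcarrier G. lact G (asc c a) x = vsc G c (lact G a x))
    \<and> (\<forall>a b. (\<forall>x\<in>vcarrier G. lact G a x = lact G b x) \<longrightarrow> a = b)
    \<and> (\<forall>T\<in>End0_B G. \<exists>a. \<forall>x\<in>vcarrier G. T x = lact G a x)"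
proof -
  obtain I e where D: "auf_system asc I e"
    using assms(2) unfolding strongly_AUF_def AUF_iff_auf_system by blast
  have M: "lmodule asc G" and C: "coherent G" and P: "projective_mod asc G"
    using assms(3) unfolding proj_generator_def by blast+
  have "lact G a \<in> End0_B G" for a
    unfolding End0_B_def using lact_in_End0[OF assms(1) D M C P, of a] by (auto simp: lhom_lact)
  moreover have "a = b" if "\<forall>x\<in>vcarrier G. lact G a x = lact G b x" for a b
    by (rule proj_generator_lact_inj[OF assms(1) D assms(3) that])
  moreover have "\<exists>a. \<forall>x\<in>vcarrier G. T x = lact G a x" if "T \<in> End0_B G" for T
    using End0_B_eq_lact[OF assms(1) D assms(3) that] by blast
  ultimately show ?thesis
    using lmodule_add_lact[OF M] lmodule_asc_lact[OF M] by blast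
qed

end
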